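(* Let $f:\mathbb{R}^n_{>0}\to\mathbb{R}^n_{>0}$ be order-preserving and homogeneous. The eigenspace $E(f)$ is nonempty and bounded in $(\mathbb{R}^n_{>0},d_H)$ if and only if for every nonempty proper subset $J\subset[n]$, $$r(f^J_0)<\lambda\big(f^{[n]\setminus J}_\infty\big).$$
   Context: $[n]=\{1,\dots,n\}$. For $x,y\in\mathbb{R}^n$, $x\le y$ means $y_i\ge x_i$ for all $i$. A map $f$ is order-preserving if $x\le y$ implies $f(x)\le f(y)$, and homogeneous if $f(tx)=tf(x)$ for all $t>0$. Hilbert's projective metric on $\mathbb{R}^n_{>0}$ is $d_H(x,y)=\log\max_{i,j\in[n]}\frac{y_ix_j}{x_iy_j}$. $E(f)=\{x\in\mathbb{R}^n_{>0}: f(x)=\mu x\text{ for some }\mu\}$ is the set of entrywise positive eigenvectors of $f$. Every order-preserving homogeneous $f:\mathbb{R}^n_{>0}\to\mathbb{R}^n_{>0}$ extends continuously (and uniquely) to order-preserving homogeneous maps $\mathbb{R}^n_{\ge0}\to\mathbb{R}^n_{\ge0}$ and $(0,\infty]^n\to(0,\infty]^n$ (order topology on the extended reals, conventions $c<\infty$, $c\cdot\infty=\infty$ for $c>0$); these extensions are also denoted $f$. For $\alpha\in[-\infty,\infty]$ and $J\subseteq[n]$, $P^J_\alpha$ is the map with $P^J_\alpha(x)_j=x_j$ if $j\in J$ and $P^J_\alpha(x)_j=\alpha$ otherwise. Define $f^J_0=P^J_0\circ f\circ P^J_0:\mathbb{R}^n_{\ge0}\to\mathbb{R}^n_{\ge0}$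 and $f^J_\infty=P^J_\infty\circ f\circ P^J_\infty:(0,\infty]^n\to(0,\infty]^n$. For an order-preserving homogeneous map $g$ on $\mathbb{R}^n_{\ge0}$ or on $(0,\infty]^n$, the upper and lower Collatz–Wielandt numbers are $r(g)=\inf_{x\in\mathbb{R}^n_{>0}}\max_{i\in[n]}g(x)_i/x_i$ and $\lambda(g)=\sup_{x\in\mathbb{R}^n_{>0}}\min_{i\in[n]}g(x)_i/x_i$, with values in $[0,\infty]$ (a ratio with infinite numerator is $\infty$). *)

theory Defs
  imports "HOL-Analysis.Analysis"
begin

text \<open>Vectors in R^n are modelled as real^'n for a finite index type 'n ([n] = UNIV).
  Points of (0,\<infinity>]^n are modelled as functions 'n \<Rightarrow> ereal (product topology of
  the order topology on the extended reals).\<close>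

definition pos_vec :: "real^'n \<Rightarrow> bool" where
  "pos_vec x \<longleftrightarrow> (\<forall>i. 0 < x $ i)"

definition nonneg_vec :: "real^'n \<Rightarrow> bool" where
  "nonneg_vec x \<longleftrightarrow> (\<forall>i. 0 \<le> x $ i)"

definition order_preserving_pos :: "(real^'n \<Rightarrow> real^'n) \<Rightarrow> bool" where
  "order_preserving_pos f \<longleftrightarrow>
     (\<forall>x y. pos_vec x \<and> pos_vec y \<and> (\<forall>i. x $ i \<le> y $ i) \<longrightarrow> (\<forall>i. f x $ i \<le> f y $ i))"

definition homogeneous_pos :: "(real^'n \<Rightarrow> real^'n) \<Rightarrow> bool" where
  "homogeneous_pos f \<longleftrightarrow> (\<forall>x t. pos_vec x \<and> 0 < t \<longrightarrow> f (t *\<^sub>R x) = t *\<^sub>R f x)"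

definition hilbert_metric :: "real^'n \<Rightarrow> real^'n \<Rightarrow> real" where
  "hilbert_metric x y = ln (Max {(y $ i * x $ j) / (x $ i * y $ j) | i j. True})"

definition eigvecs :: "(real^'n \<Rightarrow> real^'n) \<Rightarrow> (real^'n) set" where
  "eigvecs f = {x. pos_vec x \<and> (\<exists>\<mu>::real. f x = \<mu> *\<^sub>R x)}"

definition hilbert_bounded :: "(real^'n) set \<Rightarrow> bool" where
  "hilbert_bounded S \<longleftrightarrow> (\<exists>x0 C. pos_vec x0 \<and> (\<forall>x\<in>S. hilbert_metric x0 x \<le> C))"

text \<open>The continuous extension of f to the closed cone R^n_{\<ge>0}: its value at x is the
  limit of f(y) as y \<rightarrow> x with y in R^n_{>0} (dense in R^n_{\<ge>0}).\<close>
definition ext0 :: "(real^'n \<Rightarrow> real^'n) \<Rightarrow> real^'n \<Rightarrow> real^'n" where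
  "ext0 f x = Lim (at x within {y. pos_vec y}) f"

definition ereal_vec :: "real^'n \<Rightarrow> ('n \<Rightarrow> ereal)" where
  "ereal_vec y = (\<lambda>i. ereal (y $ i))"

text \<open>The continuous extension of f to (0,\<infinity>]^n: its value at x is the limit of f(y)
  as y \<rightarrow> x with y in R^n_{>0} (dense in (0,\<infinity>]^n); limits in the product
  topology are taken componentwise.\<close>
definition extinf :: "(real^'n \<Rightarrow> real^'n) \<Rightarrow> ('n \<Rightarrow> ereal) \<Rightarrow> ('n \<Rightarrow> ereal)" where
  "extinf f x = (\<lambda>i. Lim (at x within (ereal_vec ` {y. pos_vec y}))
                    (\<lambda>z. ereal (f (\<chi> j. real_of_ereal (z j)) $ i)))"

definition P0 :: "'n set \<Rightarrow> real^'n \<Rightarrow> real^'n" where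
  "P0 J x = (\<chi> j. if j \<in> J then x $ j else 0)"

definition Pinf :: "'n set \<Rightarrow> ('n \<Rightarrow> ereal) \<Rightarrow> ('n \<Rightarrow> ereal)" where
  "Pinf J x = (\<lambda>j. if j \<in> J then x j else \<infinity>)"

definition f0J :: "(real^'n \<Rightarrow> real^'n) \<Rightarrow> 'n set \<Rightarrow> real^'n \<Rightarrow> real^'n" where
  "f0J f J = P0 J \<circ> ext0 f \<circ> P0 J"

definition finfJ :: "(real^'n \<Rightarrow> real^'n) \<Rightarrow> 'n set \<Rightarrow> ('n \<Rightarrow> ereal) \<Rightarrow> ('n \<Rightarrow> ereal)" where
  "finfJ f J = Pinf J \<circ> extinf f \<circ> Pinf J"

definition cw_upper :: "(real^'n \<Rightarrow> real^'n) \<Rightarrow> ereal" where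
  "cw_upper g = (INF x\<in>{x. pos_vec x}. ereal (Max (range (\<lambda>i. g x $ i / x $ i))))"

text \<open>Lower Collatz--Wielandt number of a map on (0,\<infinity>]^n, valued in [0,\<infinity>]
  (ereal division: \<infinity> / c = \<infinity> for c > 0).\<close>
definition cw_lower :: "(('n::finite \<Rightarrow> ereal) \<Rightarrow> ('n \<Rightarrow> ereal)) \<Rightarrow> ereal" where
  "cw_lower g = (SUP x\<in>{x. pos_vec x}. Min (range (\<lambda>i. g (ereal_vec x) i / ereal (x $ i))))"

end

theory Submission
  imports Defs
begin

(*
  If x is an eigenvector with eigenvalue \<mu>, evaluating the Collatz-Wielandt quotients at x gives
  r(f_0^J) \<le> \<mu> \<le> \<lambda>(f_\<infinity>^{[n]-J}) for every J.

  Sufficiency: Brouwer's theorem on the simplex yields eigenvectors of x \<mapsto> f (x + \<epsilon> 1), and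
  eigenvectors normalised to the simplex have bounded eigenvalues. A limit x of such approximate
  eigenvectors, with eigenvalue \<mu>, satisfies \<mu> \<le> r(f_0^J) and \<lambda>(f_\<infinity>^{[n]-J}) \<le> \<mu> for its
  support J; the gap condition therefore forces x to be positive, so x is an eigenvector, and
  the ratios x_i / x_j of normalised eigenvectors cannot blow up.

  Necessity: if r(f_0^J) \<ge> \<lambda>(f_\<infinity>^{[n]-J}), then \<mu> lies between them, which produces a
  nonnegative u supported in J with \<mu> u \<le> f_0(u) and a "super-eigenvector" 1/z at infinity,
  with z supported off J. Then f/\<mu> maps the box [max (t u) (x/L), min (1/z) (L x)] into itself,
  and its fixed points are eigenvectors y with y_k / y_l \<ge> t u_k z_l for k \<in> J, l \<notin> J,
  unbounded in t.
*)

lemma pos_vecD: "pos_vec x \<Longrightarrow> 0 < x $ i"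
  by (simp add: pos_vec_def)

lemma pos_vec_one: "pos_vec 1"
  by (simp add: pos_vec_def)

lemma pos_vec_scaleR: "pos_vec x \<Longrightarrow> 0 < t \<Longrightarrow> pos_vec (t *\<^sub>R x)"
  by (simp add: pos_vec_def)

lemma pos_vec_add_one: "nonneg_vec x \<Longrightarrow> 0 < e \<Longrightarrow> pos_vec (x + e *\<^sub>R 1)"
  by (simp add: pos_vec_def nonneg_vec_def add_nonneg_pos)

lemma pos_vec_imp_nonneg_vec: "pos_vec x \<Longrightarrow> nonneg_vec x"
  by (simp add: pos_vec_def nonneg_vec_def less_imp_le)

lemma nonneg_vec_LIMSEQ:
  assumes "\<And>k. pos_vec (X k)" and "X \<longlonglongrightarrow> x"
  shows "nonneg_vec x"
  unfolding nonneg_vec_def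
proof
  fix i
  have "(\<lambda>k. X k $ i) \<longlonglongrightarrow> x $ i" using assms(2) by (rule tendsto_vec_nth)
  then show "0 \<le> x $ i"
    using assms(1) by (auto simp: pos_vec_def less_imp_le intro: LIMSEQ_le_const)
qed

lemma nonneg_vec_P0: "pos_vec y \<Longrightarrow> nonneg_vec (P0 J y)"
  by (simp add: P0_def nonneg_vec_def pos_vec_def less_imp_le)

lemma ex_scale_below:
  fixes a b :: real
  assumes "a < b" "0 \<le> b"
  obtains s where "0 < s" "s < 1" "a < s * b"
proof (cases "a < 0")
  case True
  then show ?thesis using that[of "1/2"] assms by auto
next
  case False
  then show ?thesis using that[of "(a / b + 1) / 2"] assms by (auto simp: field_simps)
qed

lemma ex_scale_above:
  fixes a b :: real
  assumes "a < b" "0 \<le> a"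
  obtains s where "1 < s" "s * a < b"
proof (cases "a = 0")
  case True
  then show ?thesis using that[of 2] assms by auto
next
  case False
  then show ?thesis using that[of "(b / a + 1) / 2"] assms by (auto simp: field_simps)
qed

lemma tendsto_fun_iff:
  fixes l :: "'a \<Rightarrow> 'b::topological_space"
  shows "(g \<longlongrightarrow> l) F \<longleftrightarrow> (\<forall>i. ((\<lambda>x. g x i) \<longlongrightarrow> l i) F)"
  using limitin_componentwise[of "\<lambda>_. euclidean" UNIV g l F]
  by (simp add: euclidean_product_topology)

lemma eventually_mem_at_within: "\<forall>\<^sub>F y in at x within S. y \<in> S"
  by (simp add: eventually_at_filter)

lemma eventually_pos_vec_at_within: "\<forall>\<^sub>F y in at x within {y. pos_vec y}. pos_vec y"
  using eventually_mem_at_within[where x=x and S="{y. pos_vec y}"] by simp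

lemma ereal_vec_inverse: "(\<chi> j. real_of_ereal (ereal_vec w j)) = w"
  by (simp add: ereal_vec_def vec_eq_iff)

lemma ereal_pos_finite: "0 < (y::ereal) \<Longrightarrow> y \<noteq> \<infinity> \<Longrightarrow> y = ereal (real_of_ereal y) \<and> 0 < real_of_ereal y"
  by (cases y) auto

lemma tendsto_apply_at_within: "((\<lambda>z. z j) \<longlongrightarrow> y j) (at y within S)"
  using tendsto_fun_iff[of "\<lambda>z. z" y] tendsto_ident_at by blast

lemma at_within_ereal_vec_nontrivial:
  assumes ypos: "\<And>j. 0 < y j" and yinf: "y j\<^sub>0 = \<infinity>"
  shows "at y within ereal_vec ` {v. pos_vec v} \<noteq> bot"
proof -
  have fin: "y j = ereal (real_of_ereal (y j)) \<and> 0 < real_of_ereal (y j)" if "y j \<noteq> \<infinity>" for j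
    using ereal_pos_finite[OF ypos that] .
  define Z where "Z k = ereal_vec (\<chi> j. if y j = \<infinity> then real (Suc k) else real_of_ereal (y j))" for k
  have "Z k \<in> ereal_vec ` {v. pos_vec v} - {y}" for k
  proof -
    have "pos_vec (\<chi> j. if y j = \<infinity> then real (Suc k) else real_of_ereal (y j))"
      using fin by (simp add: pos_vec_def)
    moreover have "Z k j\<^sub>0 \<noteq> y j\<^sub>0" by (simp add: Z_def ereal_vec_def yinf)
    ultimately show ?thesis by (auto simp: Z_def)
  qed
  moreover have "(\<lambda>k. Z k j) \<longlonglongrightarrow> y j" for j
  proof (cases "y j = \<infinity>")
    case True
    then show ?thesis using LIMSEQ_Suc[OF id_nat_ereal_tendsto_PInf] by (simp add: Z_def ereal_vec_def)
  next
    case False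
    then show ?thesis using fin[OF False] by (simp add: Z_def ereal_vec_def)
  qed
  then have "Z \<longlonglongrightarrow> y" unfolding tendsto_fun_iff ..
  ultimately have "y islimpt ereal_vec ` {v. pos_vec v}" unfolding islimpt_sequential by blast
  then show ?thesis by (simp add: trivial_limit_within)
qed

lemma Max_pairs_ge: "g i j \<le> Max ((\<lambda>(i, j). g i j) ` (UNIV :: ('a::finite \<times> 'a) set))"
  by (rule Max_ge) (auto intro: rev_image_eqI[of "(i, j)"])

lemma eventually_scaled_less_LIMSEQ:
  fixes X :: "nat \<Rightarrow> real^'n"
  assumes "X \<longlonglongrightarrow> x" "x $ i = 0" "0 < x $ j"
  shows "\<forall>\<^sub>F k in sequentially. c * X k $ i < X k $ j"
proof -
  have "(\<lambda>k. X k $ j - c * X k $ i) \<longlonglongrightarrow> x $ j - c * x $ i"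
    by (intro tendsto_intros tendsto_vec_nth assms(1))
  moreover have "0 < x $ j - c * x $ i" using assms(2,3) by simp
  ultimately have "\<forall>\<^sub>F k in sequentially. 0 < X k $ j - c * X k $ i"
    by (rule order_tendstoD(1))
  then show ?thesis by (rule eventually_mono) simp
qed

lemma LIMSEQ_pos_vec_ratio_bounded:
  fixes X :: "nat \<Rightarrow> real^'n"
  assumes lim: "X \<longlonglongrightarrow> x" and x: "pos_vec x"
  obtains R where "\<forall>\<^sub>F k in sequentially. \<forall>i j. X k $ i / X k $ j < R"
proof -
  define R where "R = Max ((\<lambda>(i, j). x $ i / x $ j) ` UNIV) + 1"
  have "\<forall>\<^sub>F k in sequentially. X k $ i / X k $ j < R" for i j
  proof (rule order_tendstoD(2))
    show "(\<lambda>k. X k $ i / X k $ j) \<longlonglongrightarrow> x $ i / x $ j"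
      using lim pos_vecD[OF x, of j] by (intro tendsto_divide tendsto_vec_nth) auto
    show "x $ i / x $ j < R" using Max_pairs_ge[of "\<lambda>i j. x $ i / x $ j" i j] by (simp add: R_def)
  qed
  then show ?thesis by (intro that eventually_all_finite)
qed

section \<open>Faces of the standard simplex\<close>

definition simplex_on :: "'a::finite set \<Rightarrow> (real^'a) set" where
  "simplex_on S = {x. (\<forall>i. 0 \<le> x $ i) \<and> (\<forall>i. i \<notin> S \<longrightarrow> x $ i = 0) \<and> (\<Sum>i\<in>UNIV. x $ i) = 1}"

lemma simplex_on_nonneg: "x \<in> simplex_on S \<Longrightarrow> nonneg_vec x"
  by (simp add: simplex_on_def nonneg_vec_def)

lemma simplex_on_zero: "x \<in> simplex_on S \<Longrightarrow> i \<notin> S \<Longrightarrow> x $ i = 0"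
  by (simp add: simplex_on_def)

lemma simplex_on_le_one: "x \<in> simplex_on S \<Longrightarrow> x $ i \<le> 1"
  using member_le_sum[of i UNIV "($) x"] by (simp add: simplex_on_def)

lemma simplex_on_ex_pos:
  assumes x: "x \<in> simplex_on S"
  obtains i where "i \<in> S" "0 < x $ i"
proof -
  have "(\<Sum>i\<in>UNIV. x $ i) \<noteq> 0" using x by (simp add: simplex_on_def)
  then obtain i where "x $ i \<noteq> 0" by (meson sum.neutral)
  moreover have "0 \<le> x $ i" using x by (simp add: simplex_on_def)
  ultimately show ?thesis using that simplex_on_zero[OF x] by force
qed

lemma compact_simplex_on: "compact (simplex_on S)"
proof -
  have coord: "continuous_on UNIV (\<lambda>x::real^'a. x $ i)" for i
    by (intro continuous_on_component continuous_on_id)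
  have c1: "closed {x::real^'a. 0 \<le> x $ i}" for i
    by (rule closed_halfspace_component_ge_cart)
  have c2: "closed {x::real^'a. x $ i = 0}" for i
    by (rule closed_Collect_eq[OF coord continuous_on_const])
  have c3: "closed {x::real^'a. (\<Sum>i\<in>UNIV. x $ i) = 1}"
    by (rule closed_Collect_eq[OF continuous_on_sum[OF coord] continuous_on_const])
  have "simplex_on S = (\<Inter>i. {x. 0 \<le> x $ i}) \<inter> (\<Inter>i\<in>-S. {x. x $ i = 0}) \<inter> {x. (\<Sum>i\<in>UNIV. x $ i) = 1}"
    by (auto simp: simplex_on_def)
  then have "closed (simplex_on S)"
    by (simp only:) (intro closed_Int closed_INT ballI c1 c2 c3)
  moreover have "simplex_on S \<subseteq> cbox 0 1"
  proof
    fix x assume x: "x \<in> simplex_on S"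
    then have "0 \<le> x $ i" "x $ i \<le> 1" for i
      using simplex_on_nonneg[OF x] simplex_on_le_one[OF x] by (auto simp: nonneg_vec_def)
    then show "x \<in> cbox 0 1" by (simp add: mem_box_cart)
  qed
  ultimately show ?thesis
    using bounded_cbox bounded_subset compact_eq_bounded_closed by blast
qed

lemma convex_simplex_on: "convex (simplex_on S)"
  unfolding convex_def
proof (intro ballI allI impI)
  fix x y :: "real^'a" and u v :: real
  assume x: "x \<in> simplex_on S" and y: "y \<in> simplex_on S" and uv: "0 \<le> u" "0 \<le> v" "u + v = 1"
  have "(\<Sum>i\<in>UNIV. (u *\<^sub>R x + v *\<^sub>R y) $ i) = u * (\<Sum>i\<in>UNIV. x $ i) + v * (\<Sum>i\<in>UNIV. y $ i)"
    by (simp add: sum.distrib sum_distrib_left)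
  also have "\<dots> = 1" using x y uv by (simp add: simplex_on_def)
  finally show "u *\<^sub>R x + v *\<^sub>R y \<in> simplex_on S" using x y uv by (simp add: simplex_on_def)
qed

lemma simplex_on_nonempty: "S \<noteq> {} \<Longrightarrow> simplex_on S \<noteq> {}"
proof -
  assume "S \<noteq> {}"
  then obtain s where "s \<in> S" by auto
  then have "(\<chi> i. if i = s then 1 else 0) \<in> simplex_on S"
    by (auto simp: simplex_on_def)
  then show ?thesis by auto
qed

text \<open>Brouwer's theorem applied to the normalisation \<open>g x / \<Sum>\<^sub>i g x $ i\<close>.\<close>
lemma simplex_on_eigenvector:
  fixes g :: "real^'a::finite \<Rightarrow> real^'a"
  assumes S: "S \<noteq> {}" and cont: "continuous_on (simplex_on S) g"
    and pos: "\<And>x i. x \<in> simplex_on S \<Longrightarrow> i \<in> S \<Longrightarrow> 0 < g x $ i"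
    and zero: "\<And>x i. x \<in> simplex_on S \<Longrightarrow> i \<notin> S \<Longrightarrow> g x $ i = 0"
  obtains x \<nu> where "x \<in> simplex_on S" "0 < \<nu>" "g x = \<nu> *\<^sub>R x"
proof -
  obtain s where s: "s \<in> S" using S by auto
  have nonneg: "x \<in> simplex_on S \<Longrightarrow> 0 \<le> g x $ i" for x i
    using pos zero by (cases "i \<in> S") (auto intro: less_imp_le)
  have sum_pos: "0 < (\<Sum>i\<in>UNIV. g x $ i)" if x: "x \<in> simplex_on S" for x
  proof -
    have "g x $ s \<le> (\<Sum>i\<in>UNIV. g x $ i)" by (rule member_le_sum) (use x nonneg in auto)
    then show ?thesis using pos[OF x s] by linarith
  qed
  define h where "h x = (1 / (\<Sum>i\<in>UNIV. g x $ i)) *\<^sub>R g x" for x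
  have "continuous_on (simplex_on S) h" unfolding h_def
    by (intro continuous_intros continuous_on_component cont) (use sum_pos in force)
  moreover have "h \<in> simplex_on S \<rightarrow> simplex_on S"
  proof
    fix x assume x: "x \<in> simplex_on S"
    have "(\<Sum>i\<in>UNIV. h x $ i) = 1" using sum_pos[OF x]
      by (simp add: h_def sum_divide_distrib[symmetric])
    then show "h x \<in> simplex_on S"
      using nonneg[OF x] zero[OF x] sum_pos[OF x] by (auto simp: simplex_on_def h_def)
  qed
  ultimately obtain x where x: "x \<in> simplex_on S" "h x = x"
    using brouwer[OF compact_simplex_on convex_simplex_on simplex_on_nonempty[OF S]] by blast
  have "g x = (\<Sum>i\<in>UNIV. g x $ i) *\<^sub>R h x"
    using sum_pos[OF x(1)] unfolding h_def by simp
  with that x sum_pos[OF x(1)] show ?thesis by simp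
qed

lemma simplex_on_bounded_subseq:
  fixes m :: "nat \<Rightarrow> real"
  assumes "\<And>k. X k \<in> simplex_on S" and "\<And>k. m k \<in> {0..B}"
  obtains x \<mu> r where "x \<in> simplex_on S" "strict_mono r" "(X \<circ> r) \<longlonglongrightarrow> x" "(m \<circ> r) \<longlonglongrightarrow> \<mu>"
proof -
  have "seq_compact (simplex_on S \<times> {0..B})"
    by (rule compact_imp_seq_compact[OF compact_Times[OF compact_simplex_on compact_Icc]])
  moreover have "\<forall>k. (X k, m k) \<in> simplex_on S \<times> {0..B}" using assms by auto
  ultimately obtain l r where l: "l \<in> simplex_on S \<times> {0..B}" "strict_mono r"
      "((\<lambda>k. (X k, m k)) \<circ> r) \<longlonglongrightarrow> l"
    by (rule seq_compactE)
  have "(X \<circ> r) \<longlonglongrightarrow> fst l" using tendsto_fst[OF l(3)] by (simp add: comp_def)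
  moreover have "(m \<circ> r) \<longlonglongrightarrow> snd l" using tendsto_snd[OF l(3)] by (simp add: comp_def)
  ultimately show ?thesis using that l by (metis mem_Times_iff)
qed

section \<open>Hilbert's projective metric and Collatz-Wielandt numbers\<close>

lemma hilbert_metric_eq_Max:
  "hilbert_metric x y = ln (Max ((\<lambda>(i, j). (y $ i * x $ j) / (x $ i * y $ j)) ` UNIV))"
proof -
  have "{(y $ i * x $ j) / (x $ i * y $ j) | i j. True} = (\<lambda>(i, j). (y $ i * x $ j) / (x $ i * y $ j)) ` UNIV"
    by (auto simp: image_iff)
  then show ?thesis by (simp add: hilbert_metric_def)
qed

lemma hilbert_bounded_iff_ratio_bounded:
  assumes "\<And>x. x \<in> S \<Longrightarrow> pos_vec x"
  shows "hilbert_bounded S \<longleftrightarrow> (\<exists>C. \<forall>x\<in>S. \<forall>i j. x $ i / x $ j \<le> C)"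
proof
  assume "hilbert_bounded S"
  then obtain x0 C where x0: "pos_vec x0" and C: "\<And>x. x \<in> S \<Longrightarrow> hilbert_metric x0 x \<le> C"
    unfolding hilbert_bounded_def by blast
  define R where "R = Max ((\<lambda>(i, j). x0 $ i / x0 $ j) ` UNIV)"
  have "x $ i / x $ j \<le> exp C * R" if x: "x \<in> S" for x i j
  proof -
    let ?M = "Max ((\<lambda>(i, j). (x $ i * x0 $ j) / (x0 $ i * x $ j)) ` UNIV)"
    have pos: "0 < x $ l" "0 < x0 $ l" for l using assms[OF x] x0 by (auto simp: pos_vec_def)
    have le: "(x $ i * x0 $ j) / (x0 $ i * x $ j) \<le> ?M" by (rule Max_pairs_ge)
    have "0 < ?M" using pos by (intro less_le_trans[OF _ le]) simp
    then have "?M = exp (ln ?M)" by simp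
    also have "\<dots> \<le> exp C" using C[OF x] by (simp add: hilbert_metric_eq_Max)
    finally have "(x $ i * x0 $ j) / (x0 $ i * x $ j) \<le> exp C" using le by simp
    then have "x $ i / x $ j \<le> exp C * (x0 $ i / x0 $ j)"
      using pos by (simp add: field_simps)
    also have "x0 $ i / x0 $ j \<le> R" unfolding R_def by (rule Max_pairs_ge)
    finally show ?thesis by simp
  qed
  then show "\<exists>C. \<forall>x\<in>S. \<forall>i j. x $ i / x $ j \<le> C" by blast
next
  assume "\<exists>C. \<forall>x\<in>S. \<forall>i j. x $ i / x $ j \<le> C"
  then obtain C where C: "\<And>x i j. x \<in> S \<Longrightarrow> x $ i / x $ j \<le> C" by blast
  have "hilbert_metric 1 x \<le> ln (max C 1)" if x: "x \<in> S" for x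
  proof -
    let ?M = "Max ((\<lambda>(i, j). (x $ i * 1 $ j) / (1 $ i * x $ j)) ` UNIV)"
    have pos: "0 < x $ l" for l using assms[OF x] by (simp add: pos_vec_def)
    have diag: "(x $ i * 1 $ i) / (1 $ i * x $ i) \<le> ?M" for i by (rule Max_pairs_ge)
    have "0 < ?M" using pos[of undefined] by (intro less_le_trans[OF _ diag[of undefined]]) simp
    moreover have "?M \<le> max C 1"
      using C[OF x] by (subst Max_le_iff) (auto simp: le_max_iff_disj)
    ultimately show ?thesis by (simp add: hilbert_metric_eq_Max)
  qed
  then show "hilbert_bounded S" unfolding hilbert_bounded_def using pos_vec_one by blast
qed

lemma ereal_le_cw_upper_iff:
  "ereal \<mu> \<le> cw_upper g \<longleftrightarrow> (\<forall>y. pos_vec y \<longrightarrow> (\<exists>i. \<mu> * y $ i \<le> g y $ i))"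
proof -
  have "ereal \<mu> \<le> ereal (Max (range (\<lambda>i. g y $ i / y $ i))) \<longleftrightarrow> (\<exists>i. \<mu> * y $ i \<le> g y $ i)"
    if "pos_vec y" for y
    using that by (auto simp: Max_ge_iff pos_vec_def le_divide_eq)
  then show ?thesis unfolding cw_upper_def le_INF_iff by auto
qed

lemma cw_upper_le:
  assumes y: "pos_vec y" and le: "\<And>i. g y $ i \<le> \<mu> * y $ i"
  shows "cw_upper g \<le> ereal \<mu>"
proof -
  have "cw_upper g \<le> ereal (Max (range (\<lambda>i. g y $ i / y $ i)))"
    unfolding cw_upper_def using y by (auto intro: INF_lower)
  also have "\<dots> \<le> ereal \<mu>"
    using y le by (auto simp: Max_le_iff pos_vec_def divide_le_eq)
  finally show ?thesis .
qed

lemma cw_lower_le_iff: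
  "cw_lower g \<le> ereal \<mu> \<longleftrightarrow> (\<forall>y. pos_vec y \<longrightarrow> (\<exists>i. g (ereal_vec y) i \<le> ereal (\<mu> * y $ i)))"
proof -
  have "Min (range (\<lambda>i. g (ereal_vec y) i / ereal (y $ i))) \<le> ereal \<mu> \<longleftrightarrow>
      (\<exists>i. g (ereal_vec y) i \<le> ereal (\<mu> * y $ i))" if "pos_vec y" for y
    using that by (auto simp: Min_le_iff pos_vec_def ereal_divide_le_pos mult.commute)
  then show ?thesis unfolding cw_lower_def SUP_le_iff by auto
qed

lemma le_cw_lower:
  assumes y: "pos_vec y" and le: "\<And>i. ereal (\<mu> * y $ i) \<le> g (ereal_vec y) i"
  shows "ereal \<mu> \<le> cw_lower g"
proof -
  have "ereal \<mu> \<le> Min (range (\<lambda>i. g (ereal_vec y) i / ereal (y $ i)))"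
    using y le by (auto simp: Min_ge_iff pos_vec_def ereal_le_divide_pos mult.commute)
  also have "\<dots> \<le> cw_lower g"
    unfolding cw_lower_def using y by (auto intro: SUP_upper)
  finally show ?thesis .
qed

section \<open>Extensions of an order-preserving homogeneous map to the boundary\<close>

locale order_preserving_homogeneous =
  fixes f :: "real^'n \<Rightarrow> real^'n"
  assumes pos_vec_f: "\<And>x. pos_vec x \<Longrightarrow> pos_vec (f x)"
    and order_preserving: "order_preserving_pos f"
    and homogeneous: "homogeneous_pos f"
begin

lemma f_pos: "pos_vec x \<Longrightarrow> 0 < f x $ i"
  using pos_vec_f pos_vec_def by blast

lemma f_mono: "pos_vec x \<Longrightarrow> pos_vec y \<Longrightarrow> (\<And>j. x $ j \<le> y $ j) \<Longrightarrow> f x $ i \<le> f y $ i"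
  using order_preserving unfolding order_preserving_pos_def by blast

lemma f_scaleR: "pos_vec x \<Longrightarrow> 0 < t \<Longrightarrow> f (t *\<^sub>R x) $ i = t * f x $ i"
  using homogeneous unfolding homogeneous_pos_def by simp

lemma scaled_le_f:
  assumes "pos_vec x" "pos_vec y" "0 < t" "\<And>j. t * x $ j \<le> y $ j"
  shows "t * f x $ i \<le> f y $ i"
  using f_mono[of "t *\<^sub>R x" y i] f_scaleR[of x t i] pos_vec_scaleR[OF assms(1,3)] assms by simp

lemma f_le_scaled:
  assumes "pos_vec x" "pos_vec y" "0 < t" "\<And>j. y $ j \<le> t * x $ j"
  shows "f y $ i \<le> t * f x $ i"
  using f_mono[of y "t *\<^sub>R x" i] f_scaleR[of x t i] pos_vec_scaleR[OF assms(1,3)] assms by simp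

lemma eigenvalue_pos:
  assumes "pos_vec x" "f x = \<mu> *\<^sub>R x"
  shows "0 < \<mu>"
proof -
  have "0 < \<mu> * x $ i" "0 < x $ i" for i
    using f_pos[OF assms(1), of i] assms by (auto simp: pos_vec_def)
  then show ?thesis by (meson zero_less_mult_pos2)
qed

lemma eigvecs_pos: "x \<in> eigvecs f \<Longrightarrow> pos_vec x"
  by (simp add: eigvecs_def)

definition ext_zero :: "real^'n \<Rightarrow> real^'n" where
  "ext_zero x = (\<chi> i. Inf ((\<lambda>e. f (x + e *\<^sub>R 1) $ i) ` {0<..}))"

lemma ext_zero_bdd_below: "nonneg_vec x \<Longrightarrow> bdd_below ((\<lambda>e. f (x + e *\<^sub>R 1) $ i) ` {0<..})"
  by (auto intro!: bdd_belowI[of _ 0] less_imp_le f_pos pos_vec_add_one)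

lemma ext_zero_le: "nonneg_vec x \<Longrightarrow> 0 < e \<Longrightarrow> ext_zero x $ i \<le> f (x + e *\<^sub>R 1) $ i"
  unfolding ext_zero_def by (auto intro: cInf_lower ext_zero_bdd_below)

lemma ext_zero_greatest: "(\<And>e. 0 < e \<Longrightarrow> c \<le> f (x + e *\<^sub>R 1) $ i) \<Longrightarrow> c \<le> ext_zero x $ i"
  unfolding ext_zero_def by (auto intro!: cInf_greatest)

lemma ext_zero_nonneg: "nonneg_vec x \<Longrightarrow> 0 \<le> ext_zero x $ i"
  by (rule ext_zero_greatest) (auto intro: less_imp_le f_pos pos_vec_add_one)

lemma ext_zero_le_f:
  assumes a: "nonneg_vec a" and b: "pos_vec b" and ab: "\<And>j. a $ j \<le> b $ j"
  shows "ext_zero a $ i \<le> f b $ i"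
proof (rule field_le_epsilon)
  fix d :: real assume d: "0 < d"
  define m where "m = Min (range (($) b))"
  have m: "0 < m" using b by (simp add: m_def pos_vec_def)
  have fb: "0 < f b $ i" using b f_pos by auto
  define t where "t = d / f b $ i"
  have t: "0 < t" using d fb t_def by auto
  have "ext_zero a $ i \<le> f (a + (t * m) *\<^sub>R 1) $ i" using ext_zero_le[OF a] t m by auto
  also have "\<dots> \<le> (1 + t) * f b $ i"
  proof (rule f_le_scaled)
    show "pos_vec (a + (t * m) *\<^sub>R 1)" using pos_vec_add_one[OF a] t m by auto
    have "m \<le> b $ j" for j unfolding m_def by auto
    then have mb: "t * m \<le> t * b $ j" for j using t by (simp add: mult_left_mono)
    show "(a + (t * m) *\<^sub>R 1) $ j \<le> (1 + t) * b $ j" for j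
      using add_mono[OF ab[of j] mb[of j]] by (simp add: algebra_simps)
  qed (use b t in auto)
  also have "\<dots> = f b $ i + d" using fb by (simp add: t_def algebra_simps)
  finally show "ext_zero a $ i \<le> f b $ i + d" .
qed

lemma ext_zero_mono_scaled:
  assumes a: "nonneg_vec a" and b: "nonneg_vec b" and t: "0 < t" and ab: "\<And>j. t * a $ j \<le> b $ j"
  shows "t * ext_zero a $ i \<le> ext_zero b $ i"
proof (rule ext_zero_greatest)
  fix e :: real assume e: "0 < e"
  have "t * ext_zero a $ i \<le> t * f (a + (e / t) *\<^sub>R 1) $ i"
    using ext_zero_le[OF a, of "e / t"] e t by auto
  also have "\<dots> \<le> f (b + e *\<^sub>R 1) $ i"
    using ab t e by (intro scaled_le_f pos_vec_add_one a b) (auto simp: algebra_simps)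
  finally show "t * ext_zero a $ i \<le> f (b + e *\<^sub>R 1) $ i" .
qed

lemma ext_zero_eq_f: "pos_vec x \<Longrightarrow> ext_zero x = f x"
  unfolding vec_eq_iff
proof
  fix i assume x: "pos_vec x"
  then have x': "nonneg_vec x" by (simp add: pos_vec_def nonneg_vec_def less_imp_le)
  show "ext_zero x $ i = f x $ i"
  proof (rule antisym)
    show "ext_zero x $ i \<le> f x $ i" by (rule ext_zero_le_f[OF x' x]) simp
    show "f x $ i \<le> ext_zero x $ i"
      by (rule ext_zero_greatest, rule f_mono[OF x pos_vec_add_one[OF x']]) simp_all
  qed
qed

lemma tendsto_ext_zero:
  assumes x: "nonneg_vec x"
  shows "(f \<longlongrightarrow> ext_zero x) (at x within {y. pos_vec y})"
proof (intro vec_tendstoI order_tendstoI)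
  fix i a assume "a < ext_zero x $ i"
  then obtain s where s: "0 < s" "s < 1" "a < s * ext_zero x $ i"
    using ext_zero_nonneg[OF x] by (rule ex_scale_below)
  have "\<forall>\<^sub>F y in at x within {y. pos_vec y}. s * x $ j \<le> y $ j" for j
  proof (cases "x $ j = 0")
    case True
    show ?thesis
      by (rule eventually_mono[OF eventually_mem_at_within]) (simp add: True pos_vec_def less_imp_le)
  next
    case False
    then have "0 < x $ j" using x by (simp add: nonneg_vec_def order_less_le)
    then have "s * x $ j < x $ j" using s by simp
    then have "\<forall>\<^sub>F y in at x within {y. pos_vec y}. s * x $ j < y $ j"
      by (rule order_tendstoD(1)[OF tendsto_vec_nth[OF tendsto_ident_at]])
    then show ?thesis by (rule eventually_mono) simp
  qed
  then have "\<forall>\<^sub>F y in at x within {y. pos_vec y}. pos_vec y \<and> (\<forall>j. s * x $ j \<le> y $ j)"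
    by (intro eventually_conj eventually_all_finite eventually_pos_vec_at_within)
  then show "\<forall>\<^sub>F y in at x within {y. pos_vec y}. a < f y $ i"
  proof (rule eventually_mono)
    fix y assume y: "pos_vec y \<and> (\<forall>j. s * x $ j \<le> y $ j)"
    then have "nonneg_vec y" by (simp add: pos_vec_def nonneg_vec_def less_imp_le)
    then have "s * ext_zero x $ i \<le> ext_zero y $ i"
      using y s by (intro ext_zero_mono_scaled x) auto
    then show "a < f y $ i" using s y ext_zero_eq_f by auto
  qed
next
  fix i b assume "ext_zero x $ i < b"
  then obtain e where e: "0 < e" "f (x + e *\<^sub>R 1) $ i < b"
    using cInf_less_iff[OF _ ext_zero_bdd_below[OF x]] unfolding ext_zero_def by auto
  have "\<forall>\<^sub>F y in at x within {y. pos_vec y}. y $ j < (x + e *\<^sub>R 1) $ j" for j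
    using e by (intro order_tendstoD(2)[OF tendsto_vec_nth[OF tendsto_ident_at]]) simp
  then have "\<forall>\<^sub>F y in at x within {y. pos_vec y}. pos_vec y \<and> (\<forall>j. y $ j < (x + e *\<^sub>R 1) $ j)"
    by (intro eventually_conj eventually_all_finite eventually_pos_vec_at_within)
  then show "\<forall>\<^sub>F y in at x within {y. pos_vec y}. f y $ i < b"
  proof (rule eventually_mono)
    fix y assume "pos_vec y \<and> (\<forall>j. y $ j < (x + e *\<^sub>R 1) $ j)"
    then have "f y $ i \<le> f (x + e *\<^sub>R 1) $ i"
      by (intro f_mono pos_vec_add_one x e) (auto intro: less_imp_le)
    then show "f y $ i < b" using e by simp
  qed
qed

lemma at_within_pos_vec_nontrivial:
  assumes "nonneg_vec (x::real^'n)"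
  shows "at x within {y. pos_vec y} \<noteq> bot"
proof -
  define Y where "Y k = x + inverse (real (Suc k)) *\<^sub>R 1" for k
  have "Y k \<in> {y. pos_vec y} - {x}" for k
  proof -
    have "Y k $ undefined \<noteq> x $ undefined" by (simp add: Y_def)
    then show ?thesis using pos_vec_add_one[OF assms] by (auto simp: Y_def)
  qed
  moreover have "Y \<longlonglongrightarrow> x + 0 *\<^sub>R 1"
    unfolding Y_def by (intro tendsto_intros LIMSEQ_inverse_real_of_nat)
  ultimately have "x islimpt {y. pos_vec y}" unfolding islimpt_sequential by auto
  then show ?thesis by (simp add: trivial_limit_within)
qed

lemma ext0_eq_ext_zero: "nonneg_vec x \<Longrightarrow> ext0 f x = ext_zero x"
  unfolding ext0_def by (rule tendsto_Lim[OF at_within_pos_vec_nontrivial tendsto_ext_zero])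

lemma continuous_on_f: "continuous_on {x. pos_vec x} f"
  unfolding continuous_on_def
  using tendsto_ext_zero ext_zero_eq_f pos_vec_imp_nonneg_vec by fastforce

lemma ext_zero_ge_LIMSEQ:
  assumes Y: "\<And>k. pos_vec (Y k)" and lim: "Y \<longlonglongrightarrow> u"
    and c: "c \<longlonglongrightarrow> \<gamma>" and le: "\<And>k. c k \<le> f (Y k) $ i"
  shows "\<gamma> \<le> ext_zero u $ i"
proof (rule ext_zero_greatest)
  fix e :: real assume e: "0 < e"
  have u: "nonneg_vec u" by (rule nonneg_vec_LIMSEQ[OF Y lim])
  have "\<forall>\<^sub>F k in sequentially. Y k $ j < (u + e *\<^sub>R 1) $ j" for j
    using e by (intro order_tendstoD(2)[OF tendsto_vec_nth[OF lim]]) simp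
  then have "\<forall>\<^sub>F k in sequentially. \<forall>j. Y k $ j < (u + e *\<^sub>R 1) $ j"
    by (rule eventually_all_finite)
  then have "\<forall>\<^sub>F k in sequentially. c k \<le> f (u + e *\<^sub>R 1) $ i"
  proof (rule eventually_mono)
    fix k assume "\<forall>j. Y k $ j < (u + e *\<^sub>R 1) $ j"
    then have "f (Y k) $ i \<le> f (u + e *\<^sub>R 1) $ i"
      by (intro f_mono Y pos_vec_add_one u e) (auto intro: less_imp_le)
    then show "c k \<le> f (u + e *\<^sub>R 1) $ i" using le[of k] by linarith
  qed
  then show "\<gamma> \<le> f (u + e *\<^sub>R 1) $ i" using c by (simp add: tendsto_upperbound)
qed

definition ext_inf :: "('n \<Rightarrow> ereal) \<Rightarrow> 'n \<Rightarrow> ereal" where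
  "ext_inf y i = (SUP v\<in>{v. pos_vec v \<and> (\<forall>j. ereal (v $ j) \<le> y j)}. ereal (f v $ i))"

lemma ext_inf_upper: "pos_vec v \<Longrightarrow> (\<And>j. ereal (v $ j) \<le> y j) \<Longrightarrow> ereal (f v $ i) \<le> ext_inf y i"
  unfolding ext_inf_def by (rule SUP_upper) auto

lemma eventually_less_ext_inf:
  assumes "a < ext_inf y i"
  shows "\<forall>\<^sub>F z in at y within ereal_vec ` {v. pos_vec v}. a < ereal (f (\<chi> j. real_of_ereal (z j)) $ i)"
proof -
  obtain v where v: "pos_vec v" "\<And>j. ereal (v $ j) \<le> y j" "a < ereal (f v $ i)"
    using assms unfolding ext_inf_def less_SUP_iff by auto
  then obtain r where r: "a < ereal r" "r < f v $ i" using ereal_dense2 by force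
  obtain s where s: "0 < s" "s < 1" "r < s * f v $ i"
    by (rule ex_scale_below[OF r(2) less_imp_le[OF f_pos[OF v(1)]]])
  have "\<forall>\<^sub>F z in at y within ereal_vec ` {v. pos_vec v}. ereal (s * v $ j) < z j" for j
  proof (rule order_tendstoD(1)[OF tendsto_apply_at_within])
    have "ereal (s * v $ j) < ereal (v $ j)" using s pos_vecD[OF v(1)] by simp
    then show "ereal (s * v $ j) < y j" using v(2)[of j] by (rule less_le_trans)
  qed
  then have "\<forall>\<^sub>F z in at y within ereal_vec ` {v. pos_vec v}.
      z \<in> ereal_vec ` {v. pos_vec v} \<and> (\<forall>j. ereal (s * v $ j) < z j)"
    by (intro eventually_conj eventually_mem_at_within eventually_all_finite)
  then show ?thesis
  proof (rule eventually_mono)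
    fix z assume z: "z \<in> ereal_vec ` {v. pos_vec v} \<and> (\<forall>j. ereal (s * v $ j) < z j)"
    then obtain w where w: "pos_vec w" "z = ereal_vec w" by auto
    then have "s * f v $ i \<le> f w $ i"
      using z s v(1) by (intro scaled_le_f) (auto simp: ereal_vec_def less_imp_le)
    then show "a < ereal (f (\<chi> j. real_of_ereal (z j)) $ i)"
      using r s(3) w(2) by (auto simp: ereal_vec_inverse intro: less_le_trans)
  qed
qed

lemma ext_inf_pos:
  assumes "\<And>j. 0 < y j"
  shows "0 < ext_inf y i"
proof -
  define v where "v = (\<chi> j. if y j = \<infinity> then 1 else real_of_ereal (y j))"
  have fin: "y j = ereal (real_of_ereal (y j)) \<and> 0 < real_of_ereal (y j)" if "y j \<noteq> \<infinity>" for j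
    using ereal_pos_finite[OF assms that] .
  have v: "pos_vec v" "ereal (v $ j) \<le> y j" for j
    using fin by (auto simp: v_def pos_vec_def)
  have "0 < ereal (f v $ i)" using f_pos[OF v(1)] by simp
  also have "\<dots> \<le> ext_inf y i" by (rule ext_inf_upper[OF v])
  finally show ?thesis .
qed

lemma eventually_ext_inf_less:
  assumes ypos: "\<And>j. 0 < y j" and "ext_inf y i < b"
  shows "\<forall>\<^sub>F z in at y within ereal_vec ` {v. pos_vec v}. ereal (f (\<chi> j. real_of_ereal (z j)) $ i) < b"
proof -
  obtain c where c: "ext_inf y i < ereal c" "ereal c < b" using assms(2) ereal_dense2 by blast
  have "0 < ereal c" using ext_inf_pos[OF ypos] c(1) by (rule less_trans)
  then have c0: "0 < c" by simp
  obtain s where s: "1 < s" "ereal (s * c) \<le> b"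
  proof (cases b)
    case (real r)
    then show ?thesis using ex_scale_above[of c r] c c0 that by (auto intro: less_imp_le)
  qed (use c that[of 2] in auto)
  have "\<forall>\<^sub>F z in at y within ereal_vec ` {v. pos_vec v}. y j = \<infinity> \<or> z j < ereal (s * real_of_ereal (y j))" for j
  proof (cases "y j = \<infinity>")
    case False
    then have r: "y j = ereal (real_of_ereal (y j))" "0 < real_of_ereal (y j)"
      using ereal_pos_finite[OF ypos] by auto
    have "real_of_ereal (y j) < s * real_of_ereal (y j)" using r(2) s by simp
    then have "y j < ereal (s * real_of_ereal (y j))" by (subst r(1)) simp
    then show ?thesis by (rule eventually_mono[OF order_tendstoD(2)[OF tendsto_apply_at_within]]) simp
  qed simp
  then have "\<forall>\<^sub>F z in at y within ereal_vec ` {v. pos_vec v}. z \<in> ereal_vec ` {v. pos_vec v} \<and>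
      (\<forall>j. y j = \<infinity> \<or> z j < ereal (s * real_of_ereal (y j)))"
    by (intro eventually_conj eventually_mem_at_within eventually_all_finite)
  then show ?thesis
  proof (rule eventually_mono)
    fix z assume z: "z \<in> ereal_vec ` {v. pos_vec v} \<and> (\<forall>j. y j = \<infinity> \<or> z j < ereal (s * real_of_ereal (y j)))"
    then obtain w where w: "pos_vec w" "z = ereal_vec w" by auto
    define v where "v = (1 / s) *\<^sub>R w"
    have v: "pos_vec v" unfolding v_def using w(1) s by (simp add: pos_vec_scaleR)
    have "ereal (v $ j) \<le> y j" for j
    proof (cases "y j = \<infinity>")
      case False
      then have "w $ j < s * real_of_ereal (y j)" using z w(2) by (auto simp: ereal_vec_def)
      then have "v $ j \<le> real_of_ereal (y j)" using s by (simp add: v_def field_simps)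
      then show ?thesis by (subst conjunct1[OF ereal_pos_finite[OF ypos False]]) simp
    qed simp
    then have "ereal (f v $ i) \<le> ext_inf y i" by (rule ext_inf_upper[OF v])
    then have "ereal (f v $ i) < ereal c" using c(1) by (rule le_less_trans)
    moreover have "f w $ i = s * f v $ i" using f_scaleR[OF v, of s i] s by (simp add: v_def)
    ultimately have "ereal (f (\<chi> j. real_of_ereal (z j)) $ i) < ereal (s * c)"
      using s w(2) by (simp add: ereal_vec_inverse)
    then show "ereal (f (\<chi> j. real_of_ereal (z j)) $ i) < b" using s(2) by (rule less_le_trans)
  qed
qed

lemma extinf_eq_ext_inf:
  assumes "\<And>j. 0 < y j" and "y j\<^sub>0 = \<infinity>"
  shows "extinf f y = ext_inf y"
  unfolding extinf_def fun_eq_iff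
  by (intro allI tendsto_Lim[OF at_within_ereal_vec_nontrivial[of y j\<^sub>0, OF assms]] order_tendstoI
      eventually_less_ext_inf eventually_ext_inf_less assms(1))

lemma f0J_apply: "pos_vec y \<Longrightarrow> f0J f J y $ i = (if i \<in> J then ext_zero (P0 J y) $ i else 0)"
  by (simp add: f0J_def ext0_eq_ext_zero[OF nonneg_vec_P0]) (simp add: P0_def)

lemma finfJ_apply:
  assumes y: "pos_vec y" and J: "J \<noteq> {}"
  shows "finfJ f (- J) (ereal_vec y) i = (if i \<in> J then \<infinity> else ext_inf (Pinf (- J) (ereal_vec y)) i)"
proof -
  obtain j where "j \<in> J" using J by auto
  then have "extinf f (Pinf (- J) (ereal_vec y)) = ext_inf (Pinf (- J) (ereal_vec y))"
    using y by (intro extinf_eq_ext_inf) (auto simp: Pinf_def ereal_vec_def pos_vec_def)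
  then show ?thesis by (simp add: finfJ_def Pinf_def)
qed

lemma cw_upper_le_eigenvalue:
  assumes x: "pos_vec x" and fx: "f x = \<mu> *\<^sub>R x"
  shows "cw_upper (f0J f J) \<le> ereal \<mu>"
proof (rule cw_upper_le[OF x])
  fix i
  have "ext_zero (P0 J x) $ i \<le> f x $ i"
    using x by (intro ext_zero_le_f[OF nonneg_vec_P0[OF x] x]) (auto simp: P0_def pos_vec_def less_imp_le)
  moreover have "0 \<le> \<mu> * x $ i" using eigenvalue_pos[OF x fx] pos_vecD[OF x, of i] by simp
  ultimately show "f0J f J x $ i \<le> \<mu> * x $ i"
    using fx by (simp add: f0J_apply[OF x])
qed

lemma eigenvalue_le_cw_lower:
  assumes x: "pos_vec x" and fx: "f x = \<mu> *\<^sub>R x" and J: "J \<noteq> {}"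
  shows "ereal \<mu> \<le> cw_lower (finfJ f (- J))"
proof (rule le_cw_lower[OF x])
  fix i
  have "ereal (f x $ i) \<le> ext_inf (Pinf (- J) (ereal_vec x)) i"
    by (rule ext_inf_upper[OF x]) (simp add: Pinf_def ereal_vec_def)
  then show "ereal (\<mu> * x $ i) \<le> finfJ f (- J) (ereal_vec x) i"
    using fx by (simp add: finfJ_apply[OF x J])
qed

section \<open>Limits of approximate eigenvectors\<close>

text \<open>Exact eigenvectors, and the vectors \<open>x + \<epsilon> 1\<close> for eigenvectors \<open>x\<close> of \<open>x \<mapsto> f (x + \<epsilon> 1)\<close>,
  are approximate eigenvectors in this one-sided sense.\<close>
definition approx_eigenseq :: "(nat \<Rightarrow> real^'n) \<Rightarrow> real^'n \<Rightarrow> real \<Rightarrow> bool" where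
  "approx_eigenseq X x \<mu> \<longleftrightarrow> (\<forall>k. pos_vec (X k)) \<and> X \<longlonglongrightarrow> x \<and>
     (\<exists>m d. m \<longlonglongrightarrow> \<mu> \<and> d \<longlonglongrightarrow> 0 \<and>
        (\<forall>k i. m k * X k $ i - d k \<le> f (X k) $ i \<and> f (X k) $ i \<le> m k * X k $ i))"

lemma approx_eigenseqI:
  assumes "\<And>k. pos_vec (X k)" "X \<longlonglongrightarrow> x" "m \<longlonglongrightarrow> \<mu>" "d \<longlonglongrightarrow> 0"
    and "\<And>k i. m k * X k $ i - d k \<le> f (X k) $ i" "\<And>k i. f (X k) $ i \<le> m k * X k $ i"
  shows "approx_eigenseq X x \<mu>"
  using assms unfolding approx_eigenseq_def by blast

lemma approx_eigenseq_limit_le_ext_zero: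
  assumes "approx_eigenseq X x \<mu>"
  shows "\<mu> * x $ i \<le> ext_zero x $ i"
proof -
  obtain m d where X: "\<And>k. pos_vec (X k)" "X \<longlonglongrightarrow> x" and md: "m \<longlonglongrightarrow> \<mu>" "d \<longlonglongrightarrow> 0"
    and le: "\<And>k. m k * X k $ i - d k \<le> f (X k) $ i"
    using assms unfolding approx_eigenseq_def by blast
  have "(\<lambda>k. m k * X k $ i - d k) \<longlonglongrightarrow> \<mu> * x $ i - 0"
    by (intro tendsto_intros md tendsto_vec_nth X(2))
  then show ?thesis using ext_zero_ge_LIMSEQ[OF X] le by simp
qed

lemma eigenvalue_le_cw_upper_support:
  assumes X: "approx_eigenseq X x \<mu>" and J: "J = {i. 0 < x $ i}" "J \<noteq> {}"
  shows "ereal \<mu> \<le> cw_upper (f0J f J)"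
  unfolding ereal_le_cw_upper_iff
proof (intro allI impI)
  fix y :: "real^'n" assume y: "pos_vec y"
  have x: "nonneg_vec x" using X nonneg_vec_LIMSEQ unfolding approx_eigenseq_def by blast
  define t where "t = Min ((\<lambda>j. y $ j / x $ j) ` J)"
  have "t \<in> (\<lambda>j. y $ j / x $ j) ` J" unfolding t_def using J(2) by (intro Min_in) auto
  then obtain k where k: "k \<in> J" "t = y $ k / x $ k" by blast
  have xk: "0 < x $ k" and yk: "0 < y $ k" using k J y by (auto simp: pos_vec_def)
  have t: "0 < t" using k xk yk by simp
  have "t * x $ j \<le> P0 J y $ j" for j
  proof (cases "j \<in> J")
    case True
    then have "t \<le> y $ j / x $ j" "0 < x $ j" unfolding t_def using J by auto
    then show ?thesis using True by (simp add: P0_def le_divide_eq)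
  next
    case False
    then have "x $ j = 0" using x J by (auto simp: nonneg_vec_def order_less_le)
    then show ?thesis using False by (simp add: P0_def)
  qed
  then have "t * ext_zero x $ k \<le> ext_zero (P0 J y) $ k"
    by (rule ext_zero_mono_scaled[OF x nonneg_vec_P0[OF y] t])
  moreover have "t * (\<mu> * x $ k) \<le> t * ext_zero x $ k"
    using approx_eigenseq_limit_le_ext_zero[OF X] t by simp
  moreover have "t * (\<mu> * x $ k) = \<mu> * y $ k" using k xk by simp
  ultimately have "\<mu> * y $ k \<le> f0J f J y $ k"
    using k(1) by (simp add: f0J_apply[OF y])
  then show "\<exists>i. \<mu> * y $ i \<le> f0J f J y $ i" ..
qed

text \<open>Compare \<open>w\<close> with a late term \<open>X k\<close> of the sequence, scaled so that the two touch at a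
  coordinate \<open>i\<^sub>1 \<notin> J\<close>: since \<open>X k\<close> is small off \<open>J\<close>, the scaled vector dominates \<open>w\<close> on \<open>J\<close>.\<close>
lemma approx_eigenseq_dominated:
  assumes X: "approx_eigenseq X x \<mu>" and J: "J = {i. 0 < x $ i}" "J \<noteq> UNIV" and w: "pos_vec w"
  shows "\<exists>i. i \<notin> J \<and> f w $ i \<le> \<mu> * w $ i"
proof (rule ccontr)
  assume "\<not> ?thesis"
  then have less: "\<And>i. i \<notin> J \<Longrightarrow> \<mu> * w $ i < f w $ i" by auto
  obtain m d where Xpos: "\<And>k. pos_vec (X k)" and lim: "X \<longlonglongrightarrow> x" and m: "m \<longlonglongrightarrow> \<mu>"
    and upper: "\<And>k i. f (X k) $ i \<le> m k * X k $ i"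
    using X unfolding approx_eigenseq_def by blast
  have x: "nonneg_vec x" by (rule nonneg_vec_LIMSEQ[OF Xpos lim])
  have ev1: "\<forall>\<^sub>F k in sequentially. i \<notin> J \<longrightarrow> m k * w $ i < f w $ i" for i
  proof (cases "i \<in> J")
    case False
    have "(\<lambda>k. m k * w $ i) \<longlonglongrightarrow> \<mu> * w $ i" by (intro tendsto_intros m)
    then show ?thesis using less[OF False] by (auto elim: order_tendstoD(2)[THEN eventually_mono])
  qed simp
  have ev2: "\<forall>\<^sub>F k in sequentially. i \<notin> J \<longrightarrow> j \<in> J \<longrightarrow> w $ j / w $ i * X k $ i < X k $ j" for i j
  proof (cases "i \<notin> J \<and> j \<in> J")
    case True
    then have "x $ i = 0" "0 < x $ j" using x J(1) by (auto simp: nonneg_vec_def order_less_le)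
    then have "\<forall>\<^sub>F k in sequentially. w $ j / w $ i * X k $ i < X k $ j"
      by (rule eventually_scaled_less_LIMSEQ[OF lim])
    then show ?thesis by (rule eventually_mono) simp
  qed auto
  have ev: "\<forall>\<^sub>F k in sequentially. (\<forall>i. i \<notin> J \<longrightarrow> m k * w $ i < f w $ i) \<and>
      (\<forall>i j. i \<notin> J \<longrightarrow> j \<in> J \<longrightarrow> w $ j / w $ i * X k $ i < X k $ j)"
    by (intro eventually_conj eventually_all_finite ev1 ev2)
  obtain k where k1: "\<And>i. i \<notin> J \<Longrightarrow> m k * w $ i < f w $ i"
    and k2: "\<And>i j. i \<notin> J \<Longrightarrow> j \<in> J \<Longrightarrow> w $ j / w $ i * X k $ i < X k $ j"
    using eventually_happens'[OF _ ev] by auto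
  define s where "s = Max ((\<lambda>i. w $ i / X k $ i) ` (- J))"
  have "s \<in> (\<lambda>i. w $ i / X k $ i) ` (- J)" unfolding s_def using J(2) by (intro Max_in) auto
  then obtain i\<^sub>1 where i\<^sub>1: "i\<^sub>1 \<notin> J" "s = w $ i\<^sub>1 / X k $ i\<^sub>1" by auto
  have Xk: "0 < X k $ j" for j using pos_vecD[OF Xpos] .
  have s: "0 < s" using i\<^sub>1 Xk pos_vecD[OF w] by simp
  have "w $ j \<le> s * X k $ j" for j
  proof (cases "j \<in> J")
    case True
    then have "w $ j / w $ i\<^sub>1 * X k $ i\<^sub>1 < X k $ j" using k2 i\<^sub>1(1) by blast
    then show ?thesis using Xk[of i\<^sub>1] pos_vecD[OF w, of i\<^sub>1] by (simp add: i\<^sub>1(2) field_simps)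
  next
    case False
    then have "w $ j / X k $ j \<le> s" unfolding s_def by (intro Max_ge) auto
    then show ?thesis using Xk[of j] by (simp add: field_simps)
  qed
  then have "f w $ i\<^sub>1 \<le> s * f (X k) $ i\<^sub>1" by (rule f_le_scaled[OF Xpos w s])
  also have "\<dots> \<le> s * (m k * X k $ i\<^sub>1)" using upper s by (simp add: mult_left_mono)
  also have "\<dots> = m k * w $ i\<^sub>1" using Xk[of i\<^sub>1] by (simp add: i\<^sub>1(2))
  finally show False using k1[OF i\<^sub>1(1)] by simp
qed

lemma cw_lower_support_le_eigenvalue:
  assumes X: "approx_eigenseq X x \<mu>" and J: "J = {i. 0 < x $ i}" "J \<noteq> {}" "J \<noteq> UNIV"
  shows "cw_lower (finfJ f (- J)) \<le> ereal \<mu>"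
  unfolding cw_lower_le_iff
proof (intro allI impI)
  fix y :: "real^'n" assume y: "pos_vec y"
  let ?y = "Pinf (- J) (ereal_vec y)"
  show "\<exists>i. finfJ f (- J) (ereal_vec y) i \<le> ereal (\<mu> * y $ i)"
  proof (rule ccontr)
    assume contra: "\<not> ?thesis"
    have nle: "\<not> finfJ f (- J) (ereal_vec y) i \<le> ereal (\<mu> * y $ i)" for i
      using contra by blast
    have "ereal (\<mu> * y $ i) < ext_inf ?y i" if "i \<notin> J" for i
      using nle[of i] that by (simp add: finfJ_apply[OF y J(2)] not_le)
    then have "\<forall>i\<in>-J. ereal (\<mu> * y $ i) < ext_inf ?y i" by simp
    then obtain v where v: "\<And>i. i \<notin> J \<Longrightarrow>
        pos_vec (v i) \<and> (\<forall>j. ereal (v i $ j) \<le> ?y j) \<and> ereal (\<mu> * y $ i) < ereal (f (v i) $ i)"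
      unfolding ext_inf_def less_SUP_iff by (metis (no_types, lifting) ComplI mem_Collect_eq)
    define M where "M = max 1 (Max (range (\<lambda>(i, j). v i $ j)))"
    define w where "w = (\<chi> j. if j \<in> J then M else y $ j)"
    have "1 \<le> M" unfolding M_def by simp
    then have w: "pos_vec w" using pos_vecD[OF y] by (simp add: w_def pos_vec_def)
    have "\<mu> * w $ i < f w $ i" if i: "i \<notin> J" for i
    proof -
      have "v i $ j \<le> w $ j" for j
      proof (cases "j \<in> J")
        case True
        have "v i $ j \<le> Max (range (\<lambda>(i, j). v i $ j))" by (rule Max_ge) (auto intro: rev_image_eqI[of "(i, j)"])
        then show ?thesis using True by (simp add: w_def M_def)
      next
        case False
        then have "ereal (v i $ j) \<le> ereal (y $ j)"
          using v[OF i] by (metis Pinf_def ComplI ereal_vec_def)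
        then show ?thesis using False by (simp add: w_def)
      qed
      then have "f (v i) $ i \<le> f w $ i" using v[OF i] w by (intro f_mono) auto
      then show ?thesis using v[OF i] i by (simp add: w_def)
    qed
    then show False using approx_eigenseq_dominated[OF X J(1,3) w] by force
  qed
qed

definition gap_condition :: bool where
  "gap_condition \<longleftrightarrow> (\<forall>J. J \<noteq> {} \<and> J \<noteq> UNIV \<longrightarrow> cw_upper (f0J f J) < cw_lower (finfJ f (- J)))"

lemma approx_eigenseq_limit_pos:
  assumes gap: "gap_condition"
    and X: "approx_eigenseq X x \<mu>" and x: "x \<noteq> 0"
  shows "pos_vec x"
proof (rule ccontr)
  assume not_pos: "\<not> pos_vec x"
  define J where "J = {i. 0 < x $ i}"
  have "nonneg_vec x" using X nonneg_vec_LIMSEQ unfolding approx_eigenseq_def by blast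
  then have "J \<noteq> {}" using x by (auto simp: J_def nonneg_vec_def vec_eq_iff order_less_le)
  moreover have "J \<noteq> UNIV" using not_pos by (auto simp: J_def pos_vec_def)
  ultimately have "cw_upper (f0J f J) < cw_lower (finfJ f (- J))" using gap by (simp add: gap_condition_def)
  moreover have "ereal \<mu> \<le> cw_upper (f0J f J)"
    using eigenvalue_le_cw_upper_support[OF X J_def] \<open>J \<noteq> {}\<close> .
  moreover have "cw_lower (finfJ f (- J)) \<le> ereal \<mu>"
    using cw_lower_support_le_eigenvalue[OF X J_def] \<open>J \<noteq> {}\<close> \<open>J \<noteq> UNIV\<close> .
  ultimately show False by simp
qed

lemma approx_eigenseq_limit_eigvec:
  assumes gap: "gap_condition"
    and X: "approx_eigenseq X x \<mu>" and x: "x \<noteq> 0"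
  shows "x \<in> eigvecs f"
proof -
  have pos: "pos_vec x" by (rule approx_eigenseq_limit_pos[OF gap X x])
  obtain m d where Xpos: "\<And>k. pos_vec (X k)" and lim: "X \<longlonglongrightarrow> x" and md: "m \<longlonglongrightarrow> \<mu>" "d \<longlonglongrightarrow> 0"
    and bounds: "\<And>k i. m k * X k $ i - d k \<le> f (X k) $ i \<and> f (X k) $ i \<le> m k * X k $ i"
    using X unfolding approx_eigenseq_def by blast
  have "(\<lambda>k. f (X k)) \<longlonglongrightarrow> f x"
    using pos Xpos by (intro continuous_on_tendsto_compose[OF continuous_on_f lim] always_eventually) auto
  moreover have "(\<lambda>k. f (X k)) \<longlonglongrightarrow> \<mu> *\<^sub>R x"
  proof (rule vec_tendstoI)
    fix i
    have upper: "(\<lambda>k. m k * X k $ i) \<longlonglongrightarrow> \<mu> * x $ i"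
      by (rule tendsto_mult[OF md(1) tendsto_vec_nth[OF lim]])
    have lower: "(\<lambda>k. m k * X k $ i - d k) \<longlonglongrightarrow> \<mu> * x $ i"
      using tendsto_diff[OF upper md(2)] by simp
    have "\<forall>\<^sub>F k in sequentially. m k * X k $ i - d k \<le> f (X k) $ i"
      "\<forall>\<^sub>F k in sequentially. f (X k) $ i \<le> m k * X k $ i"
      using bounds by (blast intro: always_eventually)+
    then have "(\<lambda>k. f (X k) $ i) \<longlonglongrightarrow> \<mu> * x $ i"
      using lower upper by (rule tendsto_sandwich)
    then show "(\<lambda>k. f (X k) $ i) \<longlonglongrightarrow> (\<mu> *\<^sub>R x) $ i" by simp
  qed
  ultimately have "f x = \<mu> *\<^sub>R x" by (rule LIMSEQ_unique)
  then show ?thesis using pos by (auto simp: eigvecs_def)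
qed

section \<open>Sufficiency of the gap condition\<close>

lemma face_approx_eigenvector:
  assumes J: "J \<noteq> {}" and e: "0 < e"
  obtains p \<nu> where "p \<in> simplex_on J" "0 < \<nu>" "\<And>i. i \<in> J \<Longrightarrow> f (p + e *\<^sub>R 1) $ i = \<nu> * p $ i"
proof -
  define g where "g p = (\<chi> i. if i \<in> J then f (p + e *\<^sub>R 1) $ i else 0)" for p
  have "continuous_on (simplex_on J) (\<lambda>p. f (p + e *\<^sub>R 1))"
    by (rule continuous_on_compose2[OF continuous_on_f])
      (auto intro!: continuous_intros pos_vec_add_one simplex_on_nonneg e)
  then have "continuous_on (simplex_on J) (\<lambda>p. f (p + e *\<^sub>R 1) $ i)" for i
    by (rule continuous_on_component)
  then have "continuous_on (simplex_on J) (\<lambda>p. if i \<in> J then f (p + e *\<^sub>R 1) $ i else 0)" for i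
    by (cases "i \<in> J") simp_all
  then have "continuous_on (simplex_on J) g"
    unfolding g_def by (rule continuous_on_vec_lambda)
  moreover have "0 < g p $ i" if "p \<in> simplex_on J" "i \<in> J" for p i
    using f_pos[OF pos_vec_add_one[OF simplex_on_nonneg[OF that(1)] e]] that(2) by (simp add: g_def)
  ultimately obtain p \<nu> where p: "p \<in> simplex_on J" "0 < \<nu>" and gp: "g p = \<nu> *\<^sub>R p"
    by (rule simplex_on_eigenvector[OF J]) (auto simp: g_def)
  have "f (p + e *\<^sub>R 1) $ i = \<nu> * p $ i" if "i \<in> J" for i
    using arg_cong[OF gp, of "\<lambda>v. v $ i"] that by (simp add: g_def)
  with p that show ?thesis by blast
qed

lemma simplex_eigenvalue_le:
  assumes x: "x \<in> simplex_on S" and y: "pos_vec y" "f y = \<nu> *\<^sub>R x"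
    and b: "pos_vec b" "\<And>j. y $ j \<le> b $ j"
  shows "\<nu> \<le> (\<Sum>i\<in>UNIV. f b $ i)"
proof -
  have "(\<Sum>i\<in>UNIV. (\<nu> *\<^sub>R x) $ i) = \<nu> * (\<Sum>i\<in>UNIV. x $ i)"
    by (simp add: sum_distrib_left)
  then have "\<nu> = (\<Sum>i\<in>UNIV. (\<nu> *\<^sub>R x) $ i)" using x by (simp add: simplex_on_def)
  also have "\<dots> = (\<Sum>i\<in>UNIV. f y $ i)" using y(2) by simp
  also have "\<dots> \<le> (\<Sum>i\<in>UNIV. f b $ i)" by (rule sum_mono, rule f_mono[OF y(1) b(1) b(2)])
  finally show ?thesis .
qed

lemma approx_eigenseq_perturbed:
  assumes p: "\<And>k. nonneg_vec (p k)" and \<nu>: "\<And>k. 0 < \<nu> k"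
    and e: "\<And>k. 0 < e k" and fp: "\<And>k. f (p k + e k *\<^sub>R 1) = \<nu> k *\<^sub>R p k"
    and lim: "p \<longlonglongrightarrow> x" "\<nu> \<longlonglongrightarrow> \<mu>" "e \<longlonglongrightarrow> 0"
  shows "approx_eigenseq (\<lambda>k. p k + e k *\<^sub>R 1) x \<mu>"
proof -
  have pos: "pos_vec (p k + e k *\<^sub>R 1)" for k by (rule pos_vec_add_one[OF p e])
  have "(\<lambda>k. p k + e k *\<^sub>R 1) \<longlonglongrightarrow> x + 0 *\<^sub>R 1"
    by (rule tendsto_add[OF lim(1) tendsto_scaleR[OF lim(3) tendsto_const]])
  then have X: "(\<lambda>k. p k + e k *\<^sub>R 1) \<longlonglongrightarrow> x" by simp
  have "(\<lambda>k. \<nu> k * e k) \<longlonglongrightarrow> \<mu> * 0" by (rule tendsto_mult[OF lim(2,3)])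
  then have d: "(\<lambda>k. \<nu> k * e k) \<longlonglongrightarrow> 0" by simp
  have eq: "f (p k + e k *\<^sub>R 1) $ i = \<nu> k * (p k + e k *\<^sub>R 1) $ i - \<nu> k * e k" for k i
    using fp[of k] by (simp add: algebra_simps)
  then have lower: "\<nu> k * (p k + e k *\<^sub>R 1) $ i - \<nu> k * e k \<le> f (p k + e k *\<^sub>R 1) $ i" for k i
    by simp
  have upper: "f (p k + e k *\<^sub>R 1) $ i \<le> \<nu> k * (p k + e k *\<^sub>R 1) $ i" for k i
    using eq[of k i] \<nu>[of k] e[of k] by simp
  show ?thesis by (rule approx_eigenseqI[OF pos X lim(2) d lower upper])
qed

lemma eigvecs_nonempty:
  assumes gap: "gap_condition"
  shows "eigvecs f \<noteq> {}"
proof -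
  define e where "e k = inverse (real (Suc k))" for k
  have e: "0 < e k" "e k \<le> 1" for k by (auto simp: e_def field_simps)
  have "\<exists>p \<nu>. p \<in> simplex_on UNIV \<and> 0 < \<nu> \<and> f (p + e k *\<^sub>R 1) = \<nu> *\<^sub>R p" for k
  proof -
    obtain p \<nu> where "p \<in> simplex_on UNIV" "0 < \<nu>" "\<And>i. f (p + e k *\<^sub>R 1) $ i = \<nu> * p $ i"
      using face_approx_eigenvector[OF _ e(1), of UNIV k] by auto
    then show ?thesis by (auto simp: vec_eq_iff)
  qed
  then obtain p \<nu> where p: "\<And>k. p k \<in> simplex_on UNIV" and \<nu>: "\<And>k. 0 < \<nu> k"
    and fp: "\<And>k. f (p k + e k *\<^sub>R 1) = \<nu> k *\<^sub>R p k" by metis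
  define B where "B = (\<Sum>i\<in>UNIV. f (2 *\<^sub>R 1) $ i)"
  have \<nu>B: "\<nu> k \<in> {0..B}" for k
  proof -
    have "pos_vec (2 *\<^sub>R (1::real^'n))" by (simp add: pos_vec_def)
    moreover have "(p k + e k *\<^sub>R 1) $ j \<le> (2 *\<^sub>R (1::real^'n)) $ j" for j
      using simplex_on_le_one[OF p, of k j] e(2)[of k] by simp
    ultimately have "\<nu> k \<le> B" unfolding B_def
      by (rule simplex_eigenvalue_le[OF p pos_vec_add_one[OF simplex_on_nonneg[OF p] e(1)] fp])
    then show ?thesis using \<nu>[of k] by simp
  qed
  obtain x \<mu> r where x: "x \<in> simplex_on UNIV" and r: "strict_mono r"
    and lim: "(p \<circ> r) \<longlonglongrightarrow> x" "(\<nu> \<circ> r) \<longlonglongrightarrow> \<mu>"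
    by (rule simplex_on_bounded_subseq[OF p \<nu>B])
  obtain i where "0 < x $ i" using simplex_on_ex_pos[OF x] by blast
  then have x0: "x \<noteq> 0" by auto
  have "(e \<circ> r) \<longlonglongrightarrow> 0" unfolding e_def by (rule LIMSEQ_subseq_LIMSEQ[OF LIMSEQ_inverse_real_of_nat r])
  then have "approx_eigenseq (\<lambda>k. (p \<circ> r) k + (e \<circ> r) k *\<^sub>R 1) x \<mu>"
    using lim p \<nu> e(1) fp by (intro approx_eigenseq_perturbed) (auto intro: simplex_on_nonneg simp: comp_def)
  then show ?thesis using approx_eigenseq_limit_eigvec[OF gap _ x0] by blast
qed

lemma eigvecs_normalize:
  assumes "x \<in> eigvecs f"
  obtains y \<mu> where "y \<in> simplex_on UNIV" "pos_vec y" "f y = \<mu> *\<^sub>R y"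
    "\<And>i j. y $ i / y $ j = x $ i / x $ j"
proof -
  obtain \<mu> where x: "pos_vec x" and fx: "f x = \<mu> *\<^sub>R x" using assms by (auto simp: eigvecs_def)
  define c where "c = (\<Sum>i\<in>UNIV. x $ i)"
  have c: "0 < c" unfolding c_def using pos_vecD[OF x] by (simp add: sum_pos)
  define y where "y = (1 / c) *\<^sub>R x"
  have y: "pos_vec y" unfolding y_def using x c by (simp add: pos_vec_scaleR)
  have "(\<Sum>i\<in>UNIV. y $ i) = 1" unfolding y_def using c by (simp add: c_def sum_divide_distrib[symmetric])
  then have "y \<in> simplex_on UNIV" using y by (simp add: simplex_on_def pos_vec_def less_imp_le)
  moreover have "f y = \<mu> *\<^sub>R y"
    using f_scaleR[OF x, of "1 / c"] c fx by (simp add: y_def vec_eq_iff)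
  moreover have "y $ i / y $ j = x $ i / x $ j" for i j using c by (simp add: y_def)
  ultimately show ?thesis by (rule that[OF _ y])
qed

lemma eigvecs_hilbert_bounded:
  assumes gap: "gap_condition"
  shows "hilbert_bounded (eigvecs f)"
proof (rule ccontr)
  assume "\<not> hilbert_bounded (eigvecs f)"
  then have unbounded: "\<exists>x\<in>eigvecs f. \<exists>i j. C < x $ i / x $ j" for C
    using hilbert_bounded_iff_ratio_bounded[of "eigvecs f"] eigvecs_pos by (meson not_le)
  define B where "B = (\<Sum>i\<in>UNIV. f 1 $ i)"
  have "\<exists>y \<mu> i j. y \<in> simplex_on UNIV \<and> pos_vec y \<and> f y = \<mu> *\<^sub>R y \<and> \<mu> \<in> {0..B}
      \<and> real k < y $ i / y $ j" for k
  proof -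
    obtain x i j where x: "x \<in> eigvecs f" "real k < x $ i / x $ j" using unbounded by blast
    obtain y \<mu> where y: "y \<in> simplex_on UNIV" "pos_vec y" "f y = \<mu> *\<^sub>R y"
      and ratio: "\<And>i j. y $ i / y $ j = x $ i / x $ j" using eigvecs_normalize[OF x(1)] by blast
    have "\<mu> \<le> B" unfolding B_def
      using simplex_on_le_one[OF y(1)] by (intro simplex_eigenvalue_le[OF y(1,2,3) pos_vec_one]) simp
    moreover have "0 < \<mu>" by (rule eigenvalue_pos[OF y(2,3)])
    ultimately show ?thesis using y x(2) ratio by fastforce
  qed
  then obtain X m I J where X: "\<And>k. X k \<in> simplex_on UNIV" "\<And>k. pos_vec (X k)"
    "\<And>k. f (X k) = m k *\<^sub>R X k" and mB: "\<And>k. m k \<in> {0..B}"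
    and ratio: "\<And>k. real k < X k $ I k / X k $ J k" by metis
  obtain x \<mu> r where x: "x \<in> simplex_on UNIV" and r: "strict_mono r"
    and lim: "(X \<circ> r) \<longlonglongrightarrow> x" "(m \<circ> r) \<longlonglongrightarrow> \<mu>"
    by (rule simplex_on_bounded_subseq[OF X(1) mB])
  have "approx_eigenseq (X \<circ> r) x \<mu>"
    by (rule approx_eigenseqI[OF _ lim tendsto_const[of 0]]) (simp_all add: X(2,3))
  moreover obtain i where "0 < x $ i" using simplex_on_ex_pos[OF x] by blast
  then have "x \<noteq> 0" by auto
  ultimately have "pos_vec x" using approx_eigenseq_limit_eigvec[OF gap] eigvecs_pos by blast
  then obtain R where ev1: "\<forall>\<^sub>F k in sequentially. \<forall>i j. (X \<circ> r) k $ i / (X \<circ> r) k $ j < R"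
    by (rule LIMSEQ_pos_vec_ratio_bounded[OF lim(1)])
  obtain N :: nat where "R < real N" using reals_Archimedean2 by blast
  then have ev2: "\<forall>\<^sub>F k in sequentially. R < real k"
    by (intro eventually_sequentiallyI[of N]) auto
  obtain k where k: "\<forall>i j. X (r k) $ i / X (r k) $ j < R" "R < real k"
    using eventually_happens'[OF sequentially_bot eventually_conj[OF ev1 ev2]] by auto
  have "real k \<le> real (r k)" using seq_suble[OF r] by simp
  also have "\<dots> < X (r k) $ I (r k) / X (r k) $ J (r k)" by (rule ratio)
  also have "\<dots> < R" using k(1) by blast
  finally show False using k(2) by simp
qed

section \<open>Necessity of the gap condition\<close>

lemma approx_subeigenvector_on_face:
  assumes J: "J \<noteq> {}" and \<mu>: "0 < \<mu>" and le: "ereal \<mu> \<le> cw_upper (f0J f J)" and e: "0 < e"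
  obtains p where "p \<in> simplex_on J" "\<And>i. \<mu> * p $ i \<le> f (p + e *\<^sub>R 1) $ i"
proof -
  obtain p \<nu> where p: "p \<in> simplex_on J" "0 < \<nu>"
    and fp: "\<And>i. i \<in> J \<Longrightarrow> f (p + e *\<^sub>R 1) $ i = \<nu> * p $ i"
    using face_approx_eigenvector[OF J e] by blast
  have fpos: "0 < f (p + e *\<^sub>R 1) $ i" for i
    by (rule f_pos[OF pos_vec_add_one[OF simplex_on_nonneg[OF p(1)] e]])
  have ppos: "0 < p $ i" if "i \<in> J" for i
    using fp[OF that] fpos[of i] p(2) by (metis zero_less_mult_pos)
  define y where "y = (\<chi> i. if i \<in> J then p $ i else 1)"
  have y: "pos_vec y" using ppos by (simp add: y_def pos_vec_def)
  have P0y: "P0 J y = p" using simplex_on_zero[OF p(1)] by (auto simp: P0_def y_def vec_eq_iff)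
  obtain i where i: "\<mu> * y $ i \<le> f0J f J y $ i" using le y unfolding ereal_le_cw_upper_iff by blast
  have iJ: "i \<in> J"
  proof (rule ccontr)
    assume "i \<notin> J"
    then show False using i mult_pos_pos[OF \<mu> pos_vecD[OF y, of i]] by (simp add: f0J_apply[OF y])
  qed
  have "y $ i = p $ i" using iJ by (simp add: y_def)
  then have "\<mu> * p $ i \<le> ext_zero p $ i" using i iJ by (simp add: f0J_apply[OF y] P0y)
  also have "\<dots> \<le> f (p + e *\<^sub>R 1) $ i" by (rule ext_zero_le[OF simplex_on_nonneg[OF p(1)] e])
  also have "\<dots> = \<nu> * p $ i" by (rule fp[OF iJ])
  finally have "\<mu> \<le> \<nu>" using ppos[OF iJ] by simp
  have "\<mu> * p $ j \<le> f (p + e *\<^sub>R 1) $ j" for j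
  proof (cases "j \<in> J")
    case True
    then show ?thesis using fp[OF True] \<open>\<mu> \<le> \<nu>\<close> ppos[OF True] by simp
  next
    case False
    then show ?thesis using simplex_on_zero[OF p(1) False] fpos[of j] by simp
  qed
  with p(1) that show ?thesis by blast
qed

lemma subeigenvector_at_zero:
  assumes J: "J \<noteq> {}" and \<mu>: "0 < \<mu>" and le: "ereal \<mu> \<le> cw_upper (f0J f J)"
  obtains u where "u \<in> simplex_on J" "\<And>i. \<mu> * u $ i \<le> ext_zero u $ i"
proof -
  define e where "e k = inverse (real (Suc k))" for k
  have e: "0 < e k" for k by (simp add: e_def)
  have "\<exists>p. p \<in> simplex_on J \<and> (\<forall>i. \<mu> * p $ i \<le> f (p + e k *\<^sub>R 1) $ i)" for k
    using approx_subeigenvector_on_face[OF J \<mu> le e[of k]] by blast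
  then obtain p where p: "\<And>k. p k \<in> simplex_on J"
    and sub: "\<And>k i. \<mu> * p k $ i \<le> f (p k + e k *\<^sub>R 1) $ i" by metis
  obtain u r where u: "u \<in> simplex_on J" and r: "strict_mono r" and lim: "(p \<circ> r) \<longlonglongrightarrow> u"
    using seq_compactE[OF compact_imp_seq_compact[OF compact_simplex_on]] p by metis
  have e0: "(\<lambda>k. e (r k)) \<longlonglongrightarrow> 0"
    using LIMSEQ_subseq_LIMSEQ[OF LIMSEQ_inverse_real_of_nat r] by (simp add: e_def comp_def)
  have pr: "(\<lambda>k. p (r k)) \<longlonglongrightarrow> u" using lim by (simp add: comp_def)
  have "\<mu> * u $ i \<le> ext_zero u $ i" for i
  proof (rule ext_zero_ge_LIMSEQ)
    show "pos_vec (p (r k) + e (r k) *\<^sub>R 1)" for k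
      by (rule pos_vec_add_one[OF simplex_on_nonneg[OF p] e])
    have "(\<lambda>k. p (r k) + e (r k) *\<^sub>R 1) \<longlonglongrightarrow> u + 0 *\<^sub>R 1"
      by (rule tendsto_add[OF pr tendsto_scaleR[OF e0 tendsto_const]])
    then show "(\<lambda>k. p (r k) + e (r k) *\<^sub>R 1) \<longlonglongrightarrow> u" by simp
    show "(\<lambda>k. \<mu> * p (r k) $ i) \<longlonglongrightarrow> \<mu> * u $ i"
      by (rule tendsto_mult[OF tendsto_const tendsto_vec_nth[OF pr]])
    show "\<mu> * p (r k) $ i \<le> f (p (r k) + e (r k) *\<^sub>R 1) $ i" for k by (rule sub)
  qed
  with u that show ?thesis by blast
qed

lemma cw_lower_le_imp_below:
  assumes J: "J \<noteq> {}" and le: "cw_lower (finfJ f (- J)) \<le> ereal \<mu>" and y: "pos_vec y"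
  obtains i where "i \<notin> J" "f y $ i \<le> \<mu> * y $ i"
proof -
  obtain i where i: "finfJ f (- J) (ereal_vec y) i \<le> ereal (\<mu> * y $ i)"
    using le y unfolding cw_lower_le_iff by blast
  then have iJ: "i \<notin> J" by (auto simp: finfJ_apply[OF y J])
  have "ereal (f y $ i) \<le> ext_inf (Pinf (- J) (ereal_vec y)) i"
    by (rule ext_inf_upper[OF y]) (simp add: Pinf_def ereal_vec_def)
  also have "\<dots> \<le> ereal (\<mu> * y $ i)" using i iJ by (simp add: finfJ_apply[OF y J])
  finally show ?thesis using iJ that by simp
qed

text \<open>Brouwer's theorem for \<open>z \<mapsto> 1 / f (1 / (z + e))\<close> on the face of the simplex opposite to \<open>J\<close>.\<close>
lemma approx_supereigenvector:
  assumes J: "J \<noteq> {}" "J \<noteq> UNIV" and \<mu>: "0 < \<mu>" and le: "cw_lower (finfJ f (- J)) \<le> ereal \<mu>"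
    and e: "0 < e"
  obtains z where "z \<in> simplex_on (- J)" "\<And>i. z $ i * f (\<chi> j. 1 / (z $ j + e)) $ i \<le> \<mu>"
proof -
  define P where "P z = (\<chi> j. 1 / (z $ j + e))" for z :: "real^'n"
  have P: "pos_vec (P z)" if "nonneg_vec z" for z
    using that e by (simp add: P_def pos_vec_def nonneg_vec_def add_nonneg_pos)
  define g where "g z = (\<chi> i. if i \<notin> J then 1 / f (P z) $ i else 0)" for z
  have "z $ j + e \<noteq> 0" if "z \<in> simplex_on (- J)" for z j
    using simplex_on_nonneg[OF that] e unfolding nonneg_vec_def by (metis add_nonneg_pos less_irrefl)
  then have "continuous_on (simplex_on (- J)) P"
    unfolding P_def by (intro continuous_on_vec_lambda continuous_intros) auto
  then have "continuous_on (simplex_on (- J)) (\<lambda>z. f (P z))"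
    by (rule continuous_on_compose2[OF continuous_on_f]) (auto intro: P simplex_on_nonneg)
  moreover have "f (P z) $ i \<noteq> 0" if "z \<in> simplex_on (- J)" for z i
    using f_pos[OF P[OF simplex_on_nonneg[OF that]], of i] by simp
  ultimately have "continuous_on (simplex_on (- J)) (\<lambda>z. 1 / f (P z) $ i)" for i
    by (intro continuous_intros continuous_on_component) auto
  then have "continuous_on (simplex_on (- J)) (\<lambda>z. if i \<notin> J then 1 / f (P z) $ i else 0)" for i
    by (cases "i \<in> J") simp_all
  then have gcont: "continuous_on (simplex_on (- J)) g"
    unfolding g_def by (rule continuous_on_vec_lambda)
  have gpos: "0 < g z $ i" if "z \<in> simplex_on (- J)" "i \<in> - J" for z i
    using f_pos[OF P[OF simplex_on_nonneg[OF that(1)]]] that(2) by (simp add: g_def)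
  obtain z S where z: "z \<in> simplex_on (- J)" "0 < S" and gz: "g z = S *\<^sub>R z"
    by (rule simplex_on_eigenvector[OF _ gcont gpos]) (use J(2) in \<open>auto simp: g_def\<close>)
  have y: "pos_vec (P z)" by (rule P[OF simplex_on_nonneg[OF z(1)]])
  have zf: "z $ i * f (P z) $ i = 1 / S" if "i \<notin> J" for i
  proof -
    have "1 / f (P z) $ i = S * z $ i" using arg_cong[OF gz, of "\<lambda>v. v $ i"] that by (simp add: g_def)
    then show ?thesis using f_pos[OF y, of i] z(2) by (simp add: field_simps)
  qed
  obtain i where i: "i \<notin> J" "f (P z) $ i \<le> \<mu> * P z $ i" by (rule cw_lower_le_imp_below[OF J(1) le y])
  have zi: "0 \<le> z $ i" using simplex_on_nonneg[OF z(1)] by (simp add: nonneg_vec_def)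
  have "1 / S \<le> z $ i * (\<mu> * P z $ i)" using zf[OF i(1)] i(2) zi by (metis mult_left_mono)
  also have "\<dots> = \<mu> * (z $ i / (z $ i + e))" by (simp add: P_def)
  also have "\<dots> \<le> \<mu>" using zi e \<mu> by (simp add: divide_le_eq)
  finally have "z $ j * f (P z) $ j \<le> \<mu>" for j
    using zf[of j] simplex_on_zero[OF z(1), of j] \<mu> by (cases "j \<in> J") auto
  with z(1) that show ?thesis by (simp add: P_def)
qed

text \<open>Read \<open>w = 1 / z\<close> (infinite where \<open>z\<close> vanishes): the conclusion says \<open>f v \<le> \<mu> w\<close>
  whenever \<open>v \<le> w\<close>, i.e.\ \<open>w\<close> is a super-eigenvector of the extension of \<open>f\<close> at infinity.\<close>
lemma supereigenvector_at_infinity: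
  assumes J: "J \<noteq> {}" "J \<noteq> UNIV" and \<mu>: "0 < \<mu>" and le: "cw_lower (finfJ f (- J)) \<le> ereal \<mu>"
  obtains z where "z \<in> simplex_on (- J)"
    "\<And>v i. pos_vec v \<Longrightarrow> (\<And>j. z $ j * v $ j \<le> 1) \<Longrightarrow> z $ i * f v $ i \<le> \<mu>"
proof -
  define e where "e k = inverse (real (Suc k))" for k
  have e: "0 < e k" for k by (simp add: e_def)
  define P where "P k z = (\<chi> j. 1 / (z $ j + e k))" for k and z :: "real^'n"
  have "\<exists>z. z \<in> simplex_on (- J) \<and> (\<forall>i. z $ i * f (P k z) $ i \<le> \<mu>)" for k
    using approx_supereigenvector[OF J \<mu> le e[of k]] unfolding P_def by blast
  then obtain zs where zs: "\<And>k. zs k \<in> simplex_on (- J)" and zsf: "\<And>k i. zs k $ i * f (P k (zs k)) $ i \<le> \<mu>"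
    by metis
  obtain z r where z: "z \<in> simplex_on (- J)" and r: "strict_mono r" and lim: "(zs \<circ> r) \<longlonglongrightarrow> z"
    using seq_compactE[OF compact_imp_seq_compact[OF compact_simplex_on]] zs by metis
  have e0: "(\<lambda>k. e (r k)) \<longlonglongrightarrow> 0"
    using LIMSEQ_subseq_LIMSEQ[OF LIMSEQ_inverse_real_of_nat r] by (simp add: e_def comp_def)
  have zsn: "0 \<le> zs k $ i" for k i using simplex_on_nonneg[OF zs] by (simp add: nonneg_vec_def)
  have P: "pos_vec (P k (zs k))" for k
    using zsn e by (simp add: P_def pos_vec_def add_nonneg_pos)
  have "z $ i * f v $ i \<le> \<mu>" if v: "pos_vec v" and zv: "\<And>j. z $ j * v $ j \<le> 1" for v i
  proof (rule field_le_epsilon)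
    fix \<epsilon> :: real assume \<epsilon>: "0 < \<epsilon>"
    define \<theta> where "\<theta> = \<epsilon> / \<mu>"
    have \<theta>: "0 < \<theta>" using \<epsilon> \<mu> by (simp add: \<theta>_def)
    have "\<forall>\<^sub>F k in sequentially. v $ j * (zs (r k) $ j + e (r k)) < 1 + \<theta>" for j
    proof (rule order_tendstoD(2))
      show "(\<lambda>k. v $ j * (zs (r k) $ j + e (r k))) \<longlonglongrightarrow> v $ j * (z $ j + 0)"
        using lim unfolding comp_def by (intro tendsto_intros tendsto_vec_nth e0)
      show "v $ j * (z $ j + 0) < 1 + \<theta>" using zv[of j] \<theta> by (simp add: mult.commute)
    qed
    then have "\<forall>\<^sub>F k in sequentially. \<forall>j. v $ j * (zs (r k) $ j + e (r k)) < 1 + \<theta>"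
      by (rule eventually_all_finite)
    then have "\<forall>\<^sub>F k in sequentially. zs (r k) $ i * f v $ i \<le> (1 + \<theta>) * \<mu>"
    proof (rule eventually_mono)
      fix k assume k: "\<forall>j. v $ j * (zs (r k) $ j + e (r k)) < 1 + \<theta>"
      have "v $ j \<le> (1 + \<theta>) * P (r k) (zs (r k)) $ j" for j
      proof -
        have "0 < zs (r k) $ j + e (r k)" using zsn[of "r k" j] e[of "r k"] by linarith
        moreover have "v $ j * (zs (r k) $ j + e (r k)) \<le> 1 + \<theta>" using k less_imp_le by blast
        ultimately show ?thesis by (simp add: P_def field_simps)
      qed
      then have "f v $ i \<le> (1 + \<theta>) * f (P (r k) (zs (r k))) $ i"
        using \<theta> by (intro f_le_scaled P v) auto
      then have "zs (r k) $ i * f v $ i \<le> (1 + \<theta>) * (zs (r k) $ i * f (P (r k) (zs (r k))) $ i)"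
        using zsn[of "r k" i] by (metis mult.left_commute mult_left_mono)
      also have "\<dots> \<le> (1 + \<theta>) * \<mu>" using zsf[of "r k" i] \<theta> by simp
      finally show "zs (r k) $ i * f v $ i \<le> (1 + \<theta>) * \<mu>" .
    qed
    moreover have "(\<lambda>k. zs (r k) $ i * f v $ i) \<longlonglongrightarrow> z $ i * f v $ i"
      using lim unfolding comp_def by (intro tendsto_intros tendsto_vec_nth)
    ultimately have "z $ i * f v $ i \<le> (1 + \<theta>) * \<mu>" by (simp add: tendsto_upperbound)
    also have "\<dots> = \<mu> + \<epsilon>" using \<mu> by (simp add: \<theta>_def field_simps)
    finally show "z $ i * f v $ i \<le> \<mu> + \<epsilon>" .
  qed
  with z that show ?thesis by blast
qed

lemma eigenvector_in_box:
  assumes a: "pos_vec a" and ab: "\<And>i. a $ i \<le> b $ i" and \<mu>: "0 < \<mu>"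
    and sub: "\<And>i. \<mu> * a $ i \<le> f a $ i" and super: "\<And>i. f b $ i \<le> \<mu> * b $ i"
  obtains y where "y \<in> cbox a b" "f y = \<mu> *\<^sub>R y"
proof -
  have box_pos: "pos_vec y" if "y \<in> cbox a b" for y
    using that a by (auto simp: mem_box_cart pos_vec_def intro: less_le_trans)
  have b: "b \<in> cbox a b" using ab by (simp add: mem_box_cart)
  define h where "h y = (1 / \<mu>) *\<^sub>R f y" for y
  have "continuous_on (cbox a b) h"
    unfolding h_def using box_pos by (intro continuous_intros continuous_on_subset[OF continuous_on_f]) auto
  moreover have "h \<in> cbox a b \<rightarrow> cbox a b"
  proof
    fix y assume y: "y \<in> cbox a b"
    have "a $ i \<le> h y $ i \<and> h y $ i \<le> b $ i" for i
    proof
      have "f a $ i \<le> f y $ i" using y by (intro f_mono a box_pos) (auto simp: mem_box_cart)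
      then show "a $ i \<le> h y $ i" using sub[of i] \<mu> by (simp add: h_def field_simps)
      have "f y $ i \<le> f b $ i" using y by (intro f_mono box_pos b) (auto simp: mem_box_cart)
      then show "h y $ i \<le> b $ i" using super[of i] \<mu> by (simp add: h_def field_simps)
    qed
    then show "h y \<in> cbox a b" by (simp add: mem_box_cart)
  qed
  moreover have "cbox a b \<noteq> {}" using b by blast
  ultimately obtain y where y: "y \<in> cbox a b" "h y = y"
    using brouwer[OF compact_cbox convex_box(1)] by blast
  have "f y = \<mu> *\<^sub>R h y" using \<mu> by (simp add: h_def)
  with that y show ?thesis by simp
qed

lemma subeigenvector_sup:
  assumes a: "nonneg_vec a" "\<And>i. \<mu> * a $ i \<le> ext_zero a $ i"
    and b: "nonneg_vec b" "\<And>i. \<mu> * b $ i \<le> ext_zero b $ i"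
    and v: "pos_vec v" "\<And>i. v $ i = max (a $ i) (b $ i)"
  shows "\<mu> * v $ i \<le> f v $ i"
proof -
  have "ext_zero a $ i \<le> f v $ i" "ext_zero b $ i \<le> f v $ i"
    using v by (auto intro!: ext_zero_le_f a(1) b(1))
  then have "\<mu> * a $ i \<le> f v $ i" "\<mu> * b $ i \<le> f v $ i"
    using a(2)[of i] b(2)[of i] by linarith+
  then show ?thesis using v(2)[of i] by (simp add: max_def)
qed

lemma subeigenvector_scaleR:
  assumes u: "nonneg_vec u" "\<And>i. \<mu> * u $ i \<le> ext_zero u $ i" and t: "0 < t"
  shows "\<mu> * (t *\<^sub>R u) $ i \<le> ext_zero (t *\<^sub>R u) $ i"
proof -
  have "\<mu> * (t *\<^sub>R u) $ i \<le> t * ext_zero u $ i"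
    using mult_left_mono[OF u(2)[of i] less_imp_le[OF t]] by (simp add: mult.left_commute)
  also have "\<dots> \<le> ext_zero (t *\<^sub>R u) $ i"
    using u(1) t by (intro ext_zero_mono_scaled) (simp_all add: nonneg_vec_def)
  finally show ?thesis .
qed

lemma supereigenvector_inf:
  assumes x: "pos_vec x" "f x = \<mu> *\<^sub>R x"
    and z: "\<And>j. 0 \<le> z $ j" "\<And>v i. pos_vec v \<Longrightarrow> (\<And>j. z $ j * v $ j \<le> 1) \<Longrightarrow> z $ i * f v $ i \<le> \<mu>"
    and b: "pos_vec b" "\<And>i. b $ i = (if 0 < z $ i then min (1 / z $ i) (x $ i) else x $ i)"
  shows "f b $ i \<le> \<mu> * b $ i"
proof -
  have "f b $ i \<le> f x $ i" using b by (intro f_mono x(1)) auto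
  then have fx: "f b $ i \<le> \<mu> * x $ i" using x(2) by simp
  show ?thesis
  proof (cases "0 < z $ i")
    case True
    have "z $ j * b $ j \<le> 1" for j
    proof (cases "0 < z $ j")
      case True
      then have "b $ j \<le> 1 / z $ j" using b(2)[of j] by simp
      then show ?thesis using True by (simp add: field_simps)
    next
      case False
      then show ?thesis using z(1)[of j] by simp
    qed
    then have "z $ i * f b $ i \<le> \<mu>" by (rule z(2)[OF b(1)])
    then have "f b $ i \<le> \<mu> * (1 / z $ i)" using True by (simp add: field_simps)
    then show ?thesis using fx True b(2)[of i] by (simp add: min_def)
  next
    case False
    then show ?thesis using fx b(2)[of i] by simp
  qed
qed

text \<open>Brouwer's theorem for \<open>f / \<mu>\<close> on the box with lower corner \<open>max u (x / L)\<close> and upper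
  corner \<open>min (1 / z) (L x)\<close>, for \<open>L\<close> large; the disjoint supports make it a box.\<close>
lemma eigvec_between:
  assumes x: "pos_vec x" "f x = \<mu> *\<^sub>R x"
    and u: "nonneg_vec u" "\<And>i. \<mu> * u $ i \<le> ext_zero u $ i"
    and z: "\<And>j. 0 \<le> z $ j" "\<And>v i. pos_vec v \<Longrightarrow> (\<And>j. z $ j * v $ j \<le> 1) \<Longrightarrow> z $ i * f v $ i \<le> \<mu>"
    and disjoint: "\<And>i. 0 < z $ i \<Longrightarrow> u $ i = 0"
  obtains y where "y \<in> eigvecs f" "\<And>i. u $ i \<le> y $ i" "\<And>i. z $ i * y $ i \<le> 1"
proof -
  have \<mu>: "0 < \<mu>" by (rule eigenvalue_pos[OF x])
  have xi: "0 < x $ i" for i by (rule pos_vecD[OF x(1)])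
  have ui: "0 \<le> u $ i" for i using u(1) by (simp add: nonneg_vec_def)
  define L where "L = 1 + (\<Sum>i\<in>UNIV. u $ i / x $ i + x $ i * z $ i)"
  have nonneg: "0 \<le> u $ i / x $ i" "0 \<le> x $ i * z $ i" for i
    using xi[of i] ui[of i] z(1)[of i] by simp_all
  then have "u $ i / x $ i + x $ i * z $ i \<le> (\<Sum>i\<in>UNIV. u $ i / x $ i + x $ i * z $ i)" for i
    by (intro member_le_sum) (auto intro: add_nonneg_nonneg)
  then have terms: "u $ i / x $ i + x $ i * z $ i \<le> L - 1" for i by (simp add: L_def)
  have L: "1 \<le> L" using terms[of undefined] nonneg[of undefined] by linarith
  have "u $ i / x $ i \<le> L" for i using terms[of i] nonneg[of i] by linarith
  then have uL: "u $ i \<le> L * x $ i" for i using xi[of i] by (simp add: divide_le_eq mult.commute)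
  have xz: "x $ i * z $ i \<le> L" for i using terms[of i] nonneg[of i] by linarith
  have xL: "x $ i / L \<le> L * x $ i" for i
  proof -
    have "x $ i \<le> x $ i * L" using xi[of i] L by (simp add: mult_le_cancel_left1)
    then have "x $ i / L \<le> x $ i" using L by (simp add: divide_le_eq)
    also have "x $ i \<le> L * x $ i" using xi[of i] L by (simp add: mult_le_cancel_right1)
    finally show ?thesis .
  qed
  define a where "a = (\<chi> i. max (u $ i) (((1 / L) *\<^sub>R x) $ i))"
  define b where "b = (\<chi> i. if 0 < z $ i then min (1 / z $ i) ((L *\<^sub>R x) $ i) else (L *\<^sub>R x) $ i)"
  have a: "pos_vec a" using xi L by (simp add: a_def pos_vec_def less_max_iff_disj)
  have ab: "a $ i \<le> b $ i" for i
  proof (cases "0 < z $ i")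
    case True
    have "x $ i / L \<le> 1 / z $ i" using xz[of i] True L by (simp add: field_simps)
    then show ?thesis using True disjoint[OF True] xL[of i] xi[of i] L by (simp add: a_def b_def)
  next
    case False
    then show ?thesis using xL[of i] uL[of i] by (simp add: a_def b_def)
  qed
  have xL_eig: "f ((1 / L) *\<^sub>R x) = \<mu> *\<^sub>R ((1 / L) *\<^sub>R x)" "f (L *\<^sub>R x) = \<mu> *\<^sub>R (L *\<^sub>R x)"
    using f_scaleR[OF x(1)] x(2) L by (simp_all add: vec_eq_iff mult_ac)
  have xL_pos: "pos_vec ((1 / L) *\<^sub>R x)" "pos_vec (L *\<^sub>R x)" using x(1) L by (simp_all add: pos_vec_scaleR)
  have sub: "\<mu> * a $ i \<le> f a $ i" for i
  proof (rule subeigenvector_sup[OF u _ _ a])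
    show "nonneg_vec ((1 / L) *\<^sub>R x)" by (rule pos_vec_imp_nonneg_vec[OF xL_pos(1)])
    show "\<mu> * ((1 / L) *\<^sub>R x) $ j \<le> ext_zero ((1 / L) *\<^sub>R x) $ j" for j
      using xL_eig(1) by (simp add: ext_zero_eq_f[OF xL_pos(1)])
  qed (simp add: a_def)
  have b: "pos_vec b" using a ab by (auto simp: pos_vec_def intro: less_le_trans)
  have b_eq: "b $ i = (if 0 < z $ i then min (1 / z $ i) ((L *\<^sub>R x) $ i) else (L *\<^sub>R x) $ i)" for i
    by (simp add: b_def)
  have super: "f b $ i \<le> \<mu> * b $ i" for i by (rule supereigenvector_inf[OF xL_pos(2) xL_eig(2) z b b_eq])
  obtain y where y: "y \<in> cbox a b" "f y = \<mu> *\<^sub>R y"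
    by (rule eigenvector_in_box[OF a ab \<mu> sub super])
  have "pos_vec y" using y(1) a by (auto simp: mem_box_cart pos_vec_def intro: less_le_trans)
  then have "y \<in> eigvecs f" using y(2) by (auto simp: eigvecs_def)
  moreover have "u $ i \<le> y $ i" for i using y(1) by (auto simp: mem_box_cart a_def)
  moreover have "z $ i * y $ i \<le> 1" for i
  proof (cases "0 < z $ i")
    case True
    have "y $ i \<le> b $ i" using y(1) by (simp add: mem_box_cart)
    then have "y $ i \<le> 1 / z $ i" using b_eq[of i] True by simp
    then show ?thesis using True by (simp add: field_simps)
  qed (use z(1)[of i] in simp)
  ultimately show ?thesis using that by blast
qed

lemma eigvecs_ratio_unbounded:
  assumes x: "pos_vec x" "f x = \<mu> *\<^sub>R x"
    and u: "u \<in> simplex_on J" "\<And>i. \<mu> * u $ i \<le> ext_zero u $ i"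
    and z: "z \<in> simplex_on (- J)" "\<And>v i. pos_vec v \<Longrightarrow> (\<And>j. z $ j * v $ j \<le> 1) \<Longrightarrow> z $ i * f v $ i \<le> \<mu>"
  shows "\<exists>y\<in>eigvecs f. \<exists>k l. C < y $ k / y $ l"
proof -
  obtain k where k: "0 < u $ k" using simplex_on_ex_pos[OF u(1)] by blast
  obtain l where l: "0 < z $ l" using simplex_on_ex_pos[OF z(1)] by blast
  define t where "t = (\<bar>C\<bar> + 1) / (u $ k * z $ l)"
  have t: "0 < t" and tC: "C < t * u $ k * z $ l" using k l by (auto simp: t_def)
  have tu: "nonneg_vec (t *\<^sub>R u)" using simplex_on_nonneg[OF u(1)] t by (simp add: nonneg_vec_def)
  have zn: "0 \<le> z $ j" for j using simplex_on_nonneg[OF z(1)] by (simp add: nonneg_vec_def)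
  have disjoint: "0 < z $ i \<Longrightarrow> (t *\<^sub>R u) $ i = 0" for i
    using simplex_on_zero[OF u(1), of i] simplex_on_zero[OF z(1), of i] by (cases "i \<in> J") auto
  obtain y where y: "y \<in> eigvecs f" "\<And>i. (t *\<^sub>R u) $ i \<le> y $ i" "\<And>i. z $ i * y $ i \<le> 1"
    using eigvec_between[OF x tu subeigenvector_scaleR[OF simplex_on_nonneg[OF u(1)] u(2) t] zn z(2) disjoint]
    by blast
  have yk: "0 < y $ k" and yl: "0 < y $ l" using eigvecs_pos[OF y(1)] by (simp_all add: pos_vecD)
  note tC
  also have "t * u $ k * z $ l \<le> y $ k * z $ l" using y(2)[of k] l by (simp add: mult_right_mono)
  also have "\<dots> \<le> y $ k / y $ l"
  proof -
    have "y $ k * (y $ l * z $ l) \<le> y $ k" using y(3)[of l] yk by (simp add: mult_left_le mult.commute)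
    then show ?thesis using yl by (simp add: field_simps)
  qed
  finally show ?thesis using y(1) by blast
qed

lemma gap_condition_if_bounded_eigvecs:
  assumes E: "eigvecs f \<noteq> {}" "hilbert_bounded (eigvecs f)"
  shows "gap_condition"
  unfolding gap_condition_def
proof (intro allI impI, elim conjE, rule ccontr)
  fix J assume J: "J \<noteq> {}" "J \<noteq> UNIV" and "\<not> cw_upper (f0J f J) < cw_lower (finfJ f (- J))"
  then have le: "cw_lower (finfJ f (- J)) \<le> cw_upper (f0J f J)" by simp
  obtain x \<mu> where x: "pos_vec x" "f x = \<mu> *\<^sub>R x" using E(1) by (auto simp: eigvecs_def)
  have \<mu>: "0 < \<mu>" by (rule eigenvalue_pos[OF x])
  have "ereal \<mu> \<le> cw_upper (f0J f J)" using eigenvalue_le_cw_lower[OF x J(1)] le by (rule order_trans)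
  then obtain u where u: "u \<in> simplex_on J" "\<And>i. \<mu> * u $ i \<le> ext_zero u $ i"
    using subeigenvector_at_zero[OF J(1) \<mu>] by blast
  have "cw_lower (finfJ f (- J)) \<le> ereal \<mu>" using le cw_upper_le_eigenvalue[OF x] by (rule order_trans)
  then obtain z where z: "z \<in> simplex_on (- J)"
    "\<And>v i. pos_vec v \<Longrightarrow> (\<And>j. z $ j * v $ j \<le> 1) \<Longrightarrow> z $ i * f v $ i \<le> \<mu>"
    using supereigenvector_at_infinity[OF J \<mu>] by blast
  have "\<exists>y\<in>eigvecs f. \<exists>k l. C < y $ k / y $ l" for C by (rule eigvecs_ratio_unbounded[OF x u z])
  then show False using E(2) hilbert_bounded_iff_ratio_bounded[of "eigvecs f"] eigvecs_pos by (meson not_le)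
qed

end

theorem theorem3p1:
  fixes f :: "real^'n \<Rightarrow> real^'n"
  assumes "\<And>x. pos_vec x \<Longrightarrow> pos_vec (f x)"
    and "order_preserving_pos f"
    and "homogeneous_pos f"
  shows "(eigvecs f \<noteq> {} \<and> hilbert_bounded (eigvecs f)) \<longleftrightarrow>
         (\<forall>J. J \<noteq> {} \<and> J \<noteq> UNIV \<longrightarrow> cw_upper (f0J f J) < cw_lower (finfJ f (- J)))"
proof -
  interpret order_preserving_homogeneous f using assms by unfold_locales
  show ?thesis
    using eigvecs_nonempty eigvecs_hilbert_bounded gap_condition_if_bounded_eigvecs
    unfolding gap_condition_def by blast
qed

end
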